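(* Let $I$ be a finite tree and $\Gamma\in\mathrm{Quiv}(I)$ any orientation. Then (a) the automorphism group $\mathrm{Aut}_{R_0(I)}(\Gamma)$ is cyclic, and (b) the automorphism group $\mathrm{Aut}_{R(I)}(\Gamma)$ is generated by two involutions.
   Context: Let $I$ be a finite tree (connected, acyclic finite graph). $\mathrm{Quiv}(I)$ is the set of orientations of $I$. For $\Gamma\in\mathrm{Quiv}(I)$ and a vertex $i$ that is a source or sink of $\Gamma$, $s_i\Gamma$ is the orientation obtained by reversing all arrows at $i$; $\Gamma^{\mathrm{op}}$ is obtained by reversing all arrows. The groupoid $R_0(I)$ has object set $\mathrm{Quiv}(I)$ and is generated by elementary isomorphisms $\Sigma_i:\Gamma\to s_i\Gamma$ (one for each $\Gamma$ and each source or sink $i$ of $\Gamma$), subject to the relations (whenever both sides are defined): (R1) $\Sigma_i^2=1$; (R2) $\Sigma_i\Sigma_j=\Sigma_j\Sigma_i$ whenever $i,j$ are not adjacent in $I$. The groupoid $R(I)$ has the same objects and is generated by the $\Sigma_i$ together with elementary isomorphisms $D:\Gamma\to\Gamma^{\mathrm{op}}$ for all $\Gamma$, subject to (R1), (R2) and (R3) $D^2=1$, (R4) $D\Sigma_i=\Sigma_iD$ for all $i$ (whenever defined). *)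

theory Defs
  imports "HOL-Algebra.Elementary_Groups"
begin

definition is_graph :: "'v set \<Rightarrow> ('v \<times> 'v) set \<Rightarrow> bool" where
  "is_graph V E \<longleftrightarrow> E \<subseteq> V \<times> V \<and> sym E \<and> irrefl E"

definition has_cycle :: "'v set \<Rightarrow> ('v \<times> 'v) set \<Rightarrow> bool" where
  "has_cycle V E \<longleftrightarrow> (\<exists>xs. length xs \<ge> 3 \<and> distinct xs \<and> set xs \<subseteq> V \<and>
      (\<forall>k. Suc k < length xs \<longrightarrow> (xs ! k, xs ! Suc k) \<in> E) \<and>
      (last xs, hd xs) \<in> E)"

definition is_finite_tree :: "'v set \<Rightarrow> ('v \<times> 'v) set \<Rightarrow> bool" where
  "is_finite_tree V E \<longleftrightarrow> finite V \<and> V \<noteq> {} \<and> is_graph V E \<and>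
      (\<forall>x\<in>V. \<forall>y\<in>V. (x, y) \<in> E\<^sup>*) \<and> \<not> has_cycle V E"

text \<open>An orientation is a set of arrows (a,b) meaning a \<rightarrow> b; every edge carries exactly one arrow.\<close>
definition Quiv :: "'v set \<Rightarrow> ('v \<times> 'v) set \<Rightarrow> ('v \<times> 'v) set set" where
  "Quiv V E = {Q. Q \<subseteq> E \<and> (\<forall>(a, b)\<in>E. (a, b) \<in> Q \<longleftrightarrow> (b, a) \<notin> Q)}"

definition is_source :: "('v \<times> 'v) set \<Rightarrow> 'v \<Rightarrow> bool" where
  "is_source Q i \<longleftrightarrow> (\<forall>j. (j, i) \<notin> Q)"

definition is_sink :: "('v \<times> 'v) set \<Rightarrow> 'v \<Rightarrow> bool" where
  "is_sink Q i \<longleftrightarrow> (\<forall>j. (i, j) \<notin> Q)"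

definition refl_at :: "'v \<Rightarrow> ('v \<times> 'v) set \<Rightarrow> ('v \<times> 'v) set" where
  "refl_at i Q = {(a, b) \<in> Q. a \<noteq> i \<and> b \<noteq> i} \<union> {(b, a) | a b. (a, b) \<in> Q \<and> (a = i \<or> b = i)}"

text \<open>Generators: Sig i (the elementary isomorphisms Sigma_i) and Dl (the isomorphisms D).\<close>
datatype 'v gen = Sig 'v | Dl

fun gen_step :: "'v set \<Rightarrow> ('v \<times> 'v) set \<Rightarrow> 'v gen \<Rightarrow> ('v \<times> 'v) set option" where
  "gen_step V Q (Sig i) =
     (if i \<in> V \<and> (is_source Q i \<or> is_sink Q i) then Some (refl_at i Q) else None)"
| "gen_step V Q Dl = Some (converse Q)"

text \<open>A word is a composable path of generators, read left to right (first letter applied first).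
  walk V Q w is the target object, or None if the path is not composable.\<close>
fun walk :: "'v set \<Rightarrow> ('v \<times> 'v) set \<Rightarrow> 'v gen list \<Rightarrow> ('v \<times> 'v) set option" where
  "walk V Q [] = Some Q"
| "walk V Q (g # w) = (case gen_step V Q g of None \<Rightarrow> None | Some Q' \<Rightarrow> walk V Q' w)"

text \<open>Defining relations, as pairs of (paths of) words; withD selects R(I) rather than R_0(I).
  (R1) Sigma_i Sigma_i = 1, (R2) Sigma_i Sigma_j = Sigma_j Sigma_i for non-adjacent i, j,
  (R3) D D = 1, (R4) D Sigma_i = Sigma_i D.\<close>
inductive basic_rel :: "bool \<Rightarrow> ('v \<times> 'v) set \<Rightarrow> 'v gen list \<Rightarrow> 'v gen list \<Rightarrow> bool"
  for withD :: bool and E :: "('v \<times> 'v) set" where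
  R1: "basic_rel withD E [Sig i, Sig i] []"
| R2: "(i, j) \<notin> E \<Longrightarrow> basic_rel withD E [Sig i, Sig j] [Sig j, Sig i]"
| R3: "withD \<Longrightarrow> basic_rel withD E [Dl, Dl] []"
| R4: "withD \<Longrightarrow> basic_rel withD E [Dl, Sig i] [Sig i, Dl]"

definition allowed :: "bool \<Rightarrow> 'v gen \<Rightarrow> bool" where
  "allowed withD g \<longleftrightarrow> withD \<or> g \<noteq> Dl"

definition rstep :: "bool \<Rightarrow> 'v set \<Rightarrow> ('v \<times> 'v) set \<Rightarrow> ('v \<times> 'v) set
                       \<Rightarrow> 'v gen list \<Rightarrow> 'v gen list \<Rightarrow> bool" where
  "rstep withD V E Q w w' \<longleftrightarrow>
     (\<exists>p u v s. w = p @ u @ s \<and> w' = p @ v @ s \<and> basic_rel withD E u v) \<and>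
     walk V Q w \<noteq> None \<and> walk V Q w' \<noteq> None \<and>
     (\<forall>g\<in>set w. allowed withD g) \<and> (\<forall>g\<in>set w'. allowed withD g)"

text \<open>Morphisms equal in the presented groupoid: the congruence generated by the relations.\<close>
definition word_eq :: "bool \<Rightarrow> 'v set \<Rightarrow> ('v \<times> 'v) set \<Rightarrow> ('v \<times> 'v) set
                       \<Rightarrow> 'v gen list \<Rightarrow> 'v gen list \<Rightarrow> bool" where
  "word_eq withD V E Q = equivclp (rstep withD V E Q)"

definition loops :: "bool \<Rightarrow> 'v set \<Rightarrow> ('v \<times> 'v) set \<Rightarrow> 'v gen list set" where
  "loops withD V Q = {w. walk V Q w = Some Q \<and> (\<forall>g\<in>set w. allowed withD g)}"

definition loop_class :: "bool \<Rightarrow> 'v set \<Rightarrow> ('v \<times> 'v) set \<Rightarrow> ('v \<times> 'v) set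
                          \<Rightarrow> 'v gen list \<Rightarrow> 'v gen list set" where
  "loop_class withD V E Q w = {w' \<in> loops withD V Q. word_eq withD V E Q w w'}"

definition Aut_grp :: "bool \<Rightarrow> 'v set \<Rightarrow> ('v \<times> 'v) set \<Rightarrow> ('v \<times> 'v) set
                       \<Rightarrow> 'v gen list set monoid" where
  "Aut_grp withD V E Q =
     \<lparr> carrier = loop_class withD V E Q ` loops withD V Q,
       monoid.mult = (\<lambda>A B. \<Union>a\<in>A. \<Union>b\<in>B. loop_class withD V E Q (a @ b)),
       one = loop_class withD V E Q [] \<rparr>"

abbreviation Aut_R0 :: "'v set \<Rightarrow> ('v \<times> 'v) set \<Rightarrow> ('v \<times> 'v) set \<Rightarrow> 'v gen list set monoid" where
  "Aut_R0 \<equiv> Aut_grp False"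

abbreviation Aut_R :: "'v set \<Rightarrow> ('v \<times> 'v) set \<Rightarrow> ('v \<times> 'v) set \<Rightarrow> 'v gen list set monoid" where
  "Aut_R \<equiv> Aut_grp True"

definition is_involution :: "('a, 'b) monoid_scheme \<Rightarrow> 'a \<Rightarrow> bool" where
  "is_involution G x \<longleftrightarrow> x \<in> carrier G \<and> x \<otimes>\<^bsub>G\<^esub> x = \<one>\<^bsub>G\<^esub> \<and> x \<noteq> \<one>\<^bsub>G\<^esub>"

end

theory Submission
  imports Defs
begin

text \<open>
  Using only the relations, every composable word of reflections can be rewritten as D U with
  D source-adapted and U sink-adapted (each letter a source, resp. a sink, when it is applied),
  and two sink-adapted words from the same orientation are equal as soon as every vertex occurs
  equally often in both. A sink-adapted word reverses an arrow exactly when its head has been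
  reflected once more than its tail. For a loop at \<Gamma>, the words U and rev D are sink-adapted
  and lead from the same orientation to \<Gamma>, so on the connected tree their occurrence counts
  differ by a constant k. Hence the loop equals c^k or c^(-k), where the Coxeter word c
  reflects every vertex once, and Aut_R0(\<Gamma>) is generated by [c].

  In R(I), D commutes with every reflection and D D = 1, so every loop is a loop of reflections
  or D followed by a path of reflections from \<Gamma>^op to \<Gamma>. A height function on the tree
  yields a sink-adapted such path p. Then a = [D p] and b = [D p c] are involutions:
  (D t)(D t) = t t = t (rev t) = 1 because t and rev t are sink-adapted from \<Gamma>^op with the
  same counts, while the parity of D shows a, b \<noteq> 1. Finally a^(-1) b = [c] and
  [D s] = a [rev p s], so a and b generate Aut_R(\<Gamma>).
\<close>

section \<open>Reflections and walks\<close>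

lemma refl_at_refl_at [simp]: "refl_at i (refl_at i Q) = Q"
  unfolding refl_at_def by auto

lemma converse_refl_at: "converse (refl_at i Q) = refl_at i (converse Q)"
  unfolding refl_at_def by auto

lemma is_sink_converse [simp]: "is_sink (converse Q) i \<longleftrightarrow> is_source Q i"
  unfolding is_sink_def is_source_def by auto

lemma is_source_converse [simp]: "is_source (converse Q) i \<longleftrightarrow> is_sink Q i"
  unfolding is_sink_def is_source_def by auto

lemma is_source_refl_at [simp]: "is_source (refl_at i Q) i \<longleftrightarrow> is_sink Q i"
  unfolding refl_at_def is_sink_def is_source_def by auto

lemma is_sink_refl_at [simp]: "is_sink (refl_at i Q) i \<longleftrightarrow> is_source Q i"
  unfolding refl_at_def is_sink_def is_source_def by auto

lemma refl_at_commute: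
  assumes "(i, j) \<notin> Q" "(j, i) \<notin> Q"
  shows "refl_at i (refl_at j Q) = refl_at j (refl_at i Q)"
  using assms unfolding refl_at_def by auto

lemma
  assumes "a \<noteq> i" "(a, i) \<notin> Q" "(i, a) \<notin> Q"
  shows is_sink_refl_at_other: "is_sink (refl_at a Q) i \<longleftrightarrow> is_sink Q i"
    and is_source_refl_at_other: "is_source (refl_at a Q) i \<longleftrightarrow> is_source Q i"
  using assms unfolding refl_at_def is_sink_def is_source_def by auto

lemma walk_append:
  "walk V Q (u @ v) = (case walk V Q u of None \<Rightarrow> None | Some Q' \<Rightarrow> walk V Q' v)"
  by (induction u arbitrary: Q) (auto split: option.splits)

lemma gen_step_inverse:
  assumes "gen_step V Q g = Some Q'"
  shows "gen_step V Q' g = Some Q"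
proof (cases g)
  case (Sig i)
  with assms have "i \<in> V" "is_source Q i \<or> is_sink Q i" "Q' = refl_at i Q"
    by (simp_all split: if_splits)
  with Sig show ?thesis by auto
qed (use assms in auto)

lemma walk_rev: "walk V Q w = Some Q' \<Longrightarrow> walk V Q' (rev w) = Some Q"
proof (induction w arbitrary: Q)
  case (Cons g w)
  then obtain Q1 where "gen_step V Q g = Some Q1" "walk V Q1 w = Some Q'"
    by (auto split: option.splits)
  with Cons.IH gen_step_inverse[of V Q g Q1] show ?case by (simp add: walk_append)
qed simp

lemma gen_step_converse: "gen_step V (converse Q) g = map_option converse (gen_step V Q g)"
  by (cases g) (auto simp: converse_refl_at)

lemma walk_converse: "walk V (converse Q) w = map_option converse (walk V Q w)"
  by (induction w arbitrary: Q) (auto simp: gen_step_converse split: option.splits)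

lemma walk_Dl_Sig_commute: "walk V Q (Dl # Sig i # s) = walk V Q (Sig i # Dl # s)"
  using gen_step_converse[of V Q "Sig i"] by (auto split: option.splits)

lemma walk_Dl_commute: "walk V Q (t @ Dl # r) = walk V Q (Dl # t @ r)"
  using walk_converse[of V Q t] by (auto simp: walk_append walk_converse split: option.splits)

section \<open>Equality of words\<close>

lemma equivclp_invariant:
  assumes "equivclp r x y" "\<And>a b. r a b \<Longrightarrow> f a = f b"
  shows "f x = f y"
  using assms(1) by induction (auto dest: assms(2))

lemma equivclp_map_on:
  assumes "equivclp r x y" "P x" "\<And>a b. r a b \<Longrightarrow> P a \<longleftrightarrow> P b"
    and "\<And>a b. r a b \<Longrightarrow> P a \<Longrightarrow> r' (f a) (f b)"
  shows "equivclp r' (f x) (f y)"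
proof -
  have "P y \<and> equivclp r' (f x) (f y)"
    using assms(1)
  proof (induction rule: equivclp_induct)
    case (step y z)
    then show ?case using assms(3,4) by (metis equivclp_into_equivclp)
  qed (use assms(2) in simp)
  then show ?thesis ..
qed

lemma word_eq_refl [simp]: "word_eq wd V E Q w w"
  by (simp add: word_eq_def)

lemma word_eq_sym [sym]: "word_eq wd V E Q w w' \<Longrightarrow> word_eq wd V E Q w' w"
  unfolding word_eq_def by (rule equivclp_sym)

lemma word_eq_trans [trans]:
  "word_eq wd V E Q u v \<Longrightarrow> word_eq wd V E Q v w \<Longrightarrow> word_eq wd V E Q u w"
  unfolding word_eq_def by (rule equivclp_trans)

lemma rstep_prefix:
  assumes "rstep wd V E Q' x y" "walk V Q p = Some Q'" "\<forall>g\<in>set p. allowed wd g"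
  shows "rstep wd V E Q (p @ x) (p @ y)"
proof -
  obtain q u v s where split: "x = q @ u @ s" "y = q @ v @ s" "basic_rel wd E u v"
    using assms(1) unfolding rstep_def by blast
  then have "p @ x = (p @ q) @ u @ s \<and> p @ y = (p @ q) @ v @ s \<and> basic_rel wd E u v"
    by simp
  then have "\<exists>q u v s. p @ x = q @ u @ s \<and> p @ y = q @ v @ s \<and> basic_rel wd E u v"
    by blast
  moreover have "walk V Q (p @ x) \<noteq> None \<and> walk V Q (p @ y) \<noteq> None"
    using assms(1,2) unfolding rstep_def by (simp add: walk_append)
  moreover have "(\<forall>g\<in>set (p @ x). allowed wd g) \<and> (\<forall>g\<in>set (p @ y). allowed wd g)"
    using assms(1,3) unfolding rstep_def by auto
  ultimately show ?thesis unfolding rstep_def by (simp only: simp_thms)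
qed

lemma rstep_append:
  assumes "rstep wd V E Q x y" "walk V Q (x @ s) \<noteq> None" "walk V Q (y @ s) \<noteq> None"
    and "\<forall>g\<in>set s. allowed wd g"
  shows "rstep wd V E Q (x @ s) (y @ s)"
proof -
  obtain q u v r where split: "x = q @ u @ r" "y = q @ v @ r" "basic_rel wd E u v"
    using assms(1) unfolding rstep_def by blast
  then have "\<exists>q u v r. x @ s = q @ u @ r \<and> y @ s = q @ v @ r \<and> basic_rel wd E u v"
    by (metis append.assoc)
  then show ?thesis
    using assms unfolding rstep_def by auto
qed

lemma basic_rel_mono: "basic_rel False E u v \<Longrightarrow> basic_rel wd E u v"
  by (induction rule: basic_rel.induct) (auto intro: basic_rel.intros)

lemma rstep_mono: "rstep False V E Q x y \<Longrightarrow> rstep wd V E Q x y"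
  unfolding rstep_def allowed_def by (metis basic_rel_mono)

lemma word_eq_basic_rel:
  assumes "basic_rel wd E u v" "walk V Q (u @ s) \<noteq> None" "walk V Q (v @ s) \<noteq> None"
    and "\<forall>g\<in>set (u @ v @ s). allowed wd g"
  shows "word_eq wd V E Q (u @ s) (v @ s)"
proof -
  have "\<exists>p u' v' s'. u @ s = p @ u' @ s' \<and> v @ s = p @ v' @ s' \<and> basic_rel wd E u' v'"
    using assms(1) by (metis append_Nil)
  then have "rstep wd V E Q (u @ s) (v @ s)"
    unfolding rstep_def using assms(2-4) by auto
  then show ?thesis unfolding word_eq_def by auto
qed

lemma word_eq_prefix:
  assumes "walk V Q p = Some Q'" "\<forall>g\<in>set p. allowed wd g" "word_eq wd V E Q' w w'"
  shows "word_eq wd V E Q (p @ w) (p @ w')"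
  using equivclp_map_on[where P = "\<lambda>_. True" and f = "(@) p"] assms rstep_prefix
  unfolding word_eq_def by metis

lemma word_eq_mono: "word_eq False V E Q w w' \<Longrightarrow> word_eq wd V E Q w w'"
  using equivclp_map_on[where P = "\<lambda>_. True" and f = "\<lambda>x. x"] rstep_mono
  unfolding word_eq_def by metis

lemma word_eq_even_Dl_count:
  assumes "word_eq wd V E Q w w'"
  shows "even (count_list w Dl) \<longleftrightarrow> even (count_list w' Dl)"
proof -
  have "even (count_list u Dl) \<longleftrightarrow> even (count_list v Dl)" if "basic_rel wd E u v" for u v
    using that by cases auto
  then have "even (count_list x Dl) \<longleftrightarrow> even (count_list y Dl)" if "rstep wd V E Q x y" for x y
    using that unfolding rstep_def by force
  then show ?thesis
    using assms equivclp_invariant[where f = "\<lambda>w. even (count_list w Dl)"]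
    unfolding word_eq_def by blast
qed

lemma word_eq_Cons_Cons_cancel:
  assumes "gen_step V Q g = Some Q'" "allowed wd g" "walk V Q s \<noteq> None"
    and "\<forall>h\<in>set s. allowed wd h"
  shows "word_eq wd V E Q (g # g # s) s"
proof -
  have "basic_rel wd E [g, g] []"
    using assms(2) by (cases g) (auto simp: allowed_def intro: basic_rel.intros)
  moreover have "walk V Q ([g, g] @ s) \<noteq> None"
    using assms(1,3) gen_step_inverse[OF assms(1)] by simp
  ultimately show ?thesis
    using word_eq_basic_rel[of wd E "[g, g]" "[]" V Q s] assms(2-4) by simp
qed

lemma word_eq_cancel:
  assumes "walk V Q w = Some Q'" "\<forall>g\<in>set w. allowed wd g" "walk V Q s \<noteq> None"
    and "\<forall>g\<in>set s. allowed wd g"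
  shows "word_eq wd V E Q (w @ rev w @ s) s"
  using assms
proof (induction w arbitrary: Q s)
  case (Cons g w)
  then obtain Q1 where g: "gen_step V Q g = Some Q1" and w: "walk V Q1 w = Some Q'"
    by (auto split: option.splits)
  have "walk V Q1 (g # s) \<noteq> None"
    using gen_step_inverse[OF g] Cons.prems(3) by simp
  then have "word_eq wd V E Q1 (w @ rev w @ g # s) (g # s)"
    using Cons w by simp
  then have "word_eq wd V E Q (g # w @ rev w @ g # s) (g # g # s)"
    using word_eq_prefix[of V Q "[g]"] g Cons.prems(2) by simp
  also have "word_eq wd V E Q \<dots> s"
    using word_eq_Cons_Cons_cancel[OF g] Cons.prems by simp
  finally show ?case by simp
qed simp

lemma word_eq_Sig_Sig_swap:
  assumes "(i, j) \<notin> E" "walk V Q (Sig i # Sig j # s) \<noteq> None"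
    and "walk V Q (Sig j # Sig i # s) \<noteq> None" "\<forall>g\<in>set s. allowed wd g"
  shows "word_eq wd V E Q (Sig i # Sig j # s) (Sig j # Sig i # s)"
  using word_eq_basic_rel[of wd E "[Sig i, Sig j]" "[Sig j, Sig i]" V Q s] assms
  by (simp add: basic_rel.R2 allowed_def)

lemma word_eq_Dl_Sig_swap:
  assumes "walk V Q (Dl # Sig i # s) \<noteq> None"
  shows "word_eq True V E Q (Dl # Sig i # s) (Sig i # Dl # s)"
proof -
  have "walk V Q ([Dl, Sig i] @ s) \<noteq> None" "walk V Q ([Sig i, Dl] @ s) \<noteq> None"
    using assms walk_Dl_Sig_commute[of V Q i s] by (metis append_Cons append_Nil)+
  then show ?thesis
    using word_eq_basic_rel[of True E "[Dl, Sig i]" "[Sig i, Dl]" V Q s]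
    by (simp add: basic_rel.R4 allowed_def)
qed

lemma word_eq_Dl_commute:
  assumes "Dl \<notin> set t" "walk V Q (t @ Dl # r) \<noteq> None"
  shows "word_eq True V E Q (t @ Dl # r) (Dl # t @ r)"
  using assms
proof (induction t arbitrary: Q)
  case (Cons g t)
  then obtain i where g: "g = Sig i" by (cases g) auto
  with Cons.prems obtain Q1 where step: "gen_step V Q (Sig i) = Some Q1"
    and tail: "walk V Q1 (t @ Dl # r) \<noteq> None"
    by (auto split: option.splits)
  have "word_eq True V E Q (Sig i # t @ Dl # r) (Sig i # Dl # t @ r)"
    using word_eq_prefix[OF _ _ Cons.IH, of Q "[Sig i]"] step tail Cons.prems(1) g
    by (simp add: allowed_def)
  also have "word_eq True V E Q \<dots> (Dl # Sig i # t @ r)"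
  proof (rule word_eq_sym, rule word_eq_Dl_Sig_swap)
    show "walk V Q (Dl # Sig i # t @ r) \<noteq> None"
      using tail step walk_Dl_commute[of V Q1 t r] walk_Dl_Sig_commute[of V Q i "t @ r"] by simp
  qed
  finally show ?case using g by simp
qed simp

section \<open>Orientations of a graph\<close>

locale sym_graph =
  fixes V :: "'v set" and E :: "('v \<times> 'v) set"
  assumes sym_E: "sym E"
begin

lemma edge_sym: "(a, b) \<in> E \<Longrightarrow> (b, a) \<in> E"
  using sym_E by (auto dest: symD)

lemma Quiv_subset: "Q \<in> Quiv V E \<Longrightarrow> Q \<subseteq> E"
  unfolding Quiv_def by blast

lemma Quiv_edge_iff: "Q \<in> Quiv V E \<Longrightarrow> (a, b) \<in> E \<Longrightarrow> (a, b) \<in> Q \<longleftrightarrow> (b, a) \<notin> Q"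
  unfolding Quiv_def by blast

lemma Quiv_not_both: "Q \<in> Quiv V E \<Longrightarrow> (a, b) \<in> Q \<Longrightarrow> (b, a) \<notin> Q"
  using Quiv_edge_iff Quiv_subset by blast

lemma refl_at_subset: "Q \<subseteq> E \<Longrightarrow> refl_at i Q \<subseteq> E"
  unfolding refl_at_def by (auto intro: edge_sym)

lemma refl_at_in_Quiv:
  assumes Q: "Q \<in> Quiv V E"
  shows "refl_at i Q \<in> Quiv V E"
proof -
  have "refl_at i Q \<subseteq> E"
    using refl_at_subset[OF Quiv_subset[OF Q]] .
  moreover have "(a, b) \<in> refl_at i Q \<longleftrightarrow> (b, a) \<notin> refl_at i Q" if ab: "(a, b) \<in> E" for a b
    using Quiv_edge_iff[OF Q ab] Quiv_edge_iff[OF Q edge_sym[OF ab]] unfolding refl_at_def by auto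
  ultimately show ?thesis unfolding Quiv_def by blast
qed

lemma converse_in_Quiv: "Q \<in> Quiv V E \<Longrightarrow> converse Q \<in> Quiv V E"
  unfolding Quiv_def using edge_sym by auto

lemma gen_step_in_Quiv: "Q \<in> Quiv V E \<Longrightarrow> gen_step V Q g = Some Q' \<Longrightarrow> Q' \<in> Quiv V E"
  by (cases g) (auto simp: refl_at_in_Quiv converse_in_Quiv split: if_splits)

lemma walk_in_Quiv: "Q \<in> Quiv V E \<Longrightarrow> walk V Q w = Some Q' \<Longrightarrow> Q' \<in> Quiv V E"
proof (induction w arbitrary: Q)
  case (Cons g w)
  then obtain Q1 where step: "gen_step V Q g = Some Q1" and rest: "walk V Q1 w = Some Q'"
    by (auto split: option.splits)
  show ?case using Cons.IH[OF gen_step_in_Quiv[OF Cons.prems(1) step] rest] .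
qed simp

lemma Quiv_eqI:
  assumes "Q \<in> Quiv V E" "Q' \<in> Quiv V E" "Q \<subseteq> Q'"
  shows "Q = Q'"
proof
  show "Q' \<subseteq> Q"
  proof
    fix x assume "x \<in> Q'"
    moreover obtain a b where "x = (a, b)" by (cases x)
    ultimately show "x \<in> Q"
      using assms Quiv_subset Quiv_edge_iff by blast
  qed
qed (fact assms(3))

lemma sinks_not_adjacent:
  assumes "Q \<in> Quiv V E" "is_sink Q a" "is_sink Q b"
  shows "(a, b) \<notin> E"
  using assms Quiv_edge_iff unfolding is_sink_def by blast

lemma sources_not_adjacent:
  assumes "Q \<in> Quiv V E" "is_source Q a" "is_source Q b"
  shows "(a, b) \<notin> E"
  using assms Quiv_edge_iff unfolding is_source_def by blast

lemma gen_step_subset: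
  assumes "Q \<subseteq> E" "gen_step V Q g = Some Q'"
  shows "Q' \<subseteq> E"
proof (cases g)
  case (Sig i)
  then have "Q' = refl_at i Q"
    using assms(2) by (simp split: if_splits)
  then show ?thesis using refl_at_subset[OF assms(1)] by simp
qed (use assms edge_sym in auto)

lemma refl_at_nonadjacent:
  assumes "Q \<subseteq> E" "(a, i) \<notin> E" "a \<noteq> i"
  shows "refl_at a (refl_at i Q) = refl_at i (refl_at a Q)"
    and "is_sink (refl_at a Q) i \<longleftrightarrow> is_sink Q i"
    and "is_source (refl_at a Q) i \<longleftrightarrow> is_source Q i"
proof -
  have "(a, i) \<notin> Q" "(i, a) \<notin> Q"
    using assms(1,2) edge_sym by auto
  then show "refl_at a (refl_at i Q) = refl_at i (refl_at a Q)"
    and "is_sink (refl_at a Q) i \<longleftrightarrow> is_sink Q i"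
    and "is_source (refl_at a Q) i \<longleftrightarrow> is_source Q i"
    using refl_at_commute is_sink_refl_at_other is_source_refl_at_other assms(3) by metis+
qed

lemma walk_subset: "Q \<subseteq> E \<Longrightarrow> walk V Q w = Some Q' \<Longrightarrow> Q' \<subseteq> E"
proof (induction w arbitrary: Q)
  case (Cons g w)
  then obtain Q1 where step: "gen_step V Q g = Some Q1" and rest: "walk V Q1 w = Some Q'"
    by (auto split: option.splits)
  show ?case using Cons.IH[OF gen_step_subset[OF Cons.prems(1) step] rest] .
qed simp

lemma basic_rel_walk:
  assumes "basic_rel wd E u v" "Q \<subseteq> E" "walk V Q u \<noteq> None" "walk V Q v \<noteq> None"
  shows "walk V Q u = walk V Q v"
  using assms(1)
proof cases
  case (R1 i)
  then obtain Q1 where "gen_step V Q (Sig i) = Some Q1"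
    using assms(3) by (auto split: option.splits)
  then show ?thesis using R1 gen_step_inverse[of V Q "Sig i" Q1] by simp
next
  case (R2 i j)
  then have "(i, j) \<notin> Q" "(j, i) \<notin> Q"
    using assms(2) edge_sym by auto
  then show ?thesis
    using R2 assms(3,4) refl_at_commute[of i j Q] by (auto split: if_splits)
next
  case (R4 i)
  then show ?thesis using walk_Dl_Sig_commute[of V Q i "[]"] by simp
qed simp

lemma rstep_walk:
  assumes "rstep wd V E Q w w'" "Q \<subseteq> E"
  shows "walk V Q w = walk V Q w'"
proof -
  obtain p u v s where split: "w = p @ u @ s" "w' = p @ v @ s" "basic_rel wd E u v"
    and defined: "walk V Q w \<noteq> None" "walk V Q w' \<noteq> None"
    using assms(1) unfolding rstep_def by blast
  then obtain Q1 where Q1: "walk V Q p = Some Q1"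
    by (auto simp: walk_append split: option.splits)
  have "walk V Q1 u \<noteq> None" "walk V Q1 v \<noteq> None"
    using defined split Q1 by (auto simp: walk_append split: option.splits)
  then have "walk V Q1 u = walk V Q1 v"
    using basic_rel_walk[OF split(3) walk_subset[OF assms(2) Q1]] by blast
  then show ?thesis using split Q1 by (simp add: walk_append)
qed

lemma word_eq_walk: "Q \<subseteq> E \<Longrightarrow> word_eq wd V E Q w w' \<Longrightarrow> walk V Q w = walk V Q w'"
  using equivclp_invariant[where f = "walk V Q"] rstep_walk unfolding word_eq_def by metis

lemma word_eq_loops:
  assumes "Q \<subseteq> E" "word_eq wd V E Q w w'"
  shows "w \<in> loops wd V Q \<longleftrightarrow> w' \<in> loops wd V Q"
proof -
  have "x \<in> loops wd V Q \<longleftrightarrow> y \<in> loops wd V Q" if "rstep wd V E Q x y" for x y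
    using rstep_walk[OF that assms(1)] that unfolding rstep_def loops_def by simp
  then show ?thesis
    using assms(2) equivclp_invariant[where f = "\<lambda>w. w \<in> loops wd V Q"]
    unfolding word_eq_def by blast
qed

lemma word_eq_append:
  assumes "Q \<subseteq> E" "word_eq wd V E Q w w'" "walk V Q (w @ s) \<noteq> None"
    and "\<forall>g\<in>set s. allowed wd g"
  shows "word_eq wd V E Q (w @ s) (w' @ s)"
proof -
  have walk_eq: "walk V Q (x @ s) = walk V Q (y @ s)" if "rstep wd V E Q x y" for x y
    using rstep_walk[OF that assms(1)] by (simp add: walk_append)
  show ?thesis
    using equivclp_map_on[where P = "\<lambda>x. walk V Q (x @ s) \<noteq> None" and f = "\<lambda>x. x @ s"]
      assms(2,3) walk_eq rstep_append[OF _ _ _ assms(4)]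
    unfolding word_eq_def by metis
qed

lemma word_eq_Dl_normal_form:
  assumes "Q \<subseteq> E" "walk V Q w \<noteq> None"
  shows "\<exists>s. Dl \<notin> set s \<and> (word_eq True V E Q w s \<or> word_eq True V E Q w (Dl # s))"
  using assms
proof (induction w arbitrary: Q)
  case (Cons g w)
  then obtain Q1 where step: "gen_step V Q g = Some Q1" and tail: "walk V Q1 w \<noteq> None"
    by (auto split: option.splits)
  have Q1: "Q1 \<subseteq> E" using gen_step_subset[OF Cons.prems(1) step] .
  obtain s where s: "Dl \<notin> set s" "word_eq True V E Q1 w s \<or> word_eq True V E Q1 w (Dl # s)"
    using Cons.IH[OF Q1 tail] by blast
  have prefix: "word_eq True V E Q (g # w) (g # x)" if "word_eq True V E Q1 w x" for x
    using word_eq_prefix[OF _ _ that, of Q "[g]"] step by (simp add: allowed_def)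
  show ?case
  proof (cases "word_eq True V E Q1 w s")
    case True
    then show ?thesis
      using prefix[OF True] s(1) by (cases g) (auto intro: exI[of _ "g # s"] exI[of _ s])
  next
    case False
    with s have Dl_s: "word_eq True V E Q1 w (Dl # s)" by blast
    have walk_Dl_s: "walk V Q (g # Dl # s) \<noteq> None"
      using word_eq_walk[OF Q1 Dl_s] tail step by simp
    show ?thesis
    proof (cases g)
      case (Sig i)
      have "word_eq True V E Q (g # Dl # s) (Dl # Sig i # s)"
        using word_eq_sym[OF word_eq_Dl_Sig_swap] walk_Dl_s walk_Dl_Sig_commute Sig by metis
      moreover have "Dl \<notin> set (Sig i # s)"
        using s(1) by simp
      ultimately show ?thesis
        using word_eq_trans[OF prefix[OF Dl_s]] by blast
    next
      case Dl
      have "word_eq True V E Q (Dl # Dl # s) s"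
        using word_eq_Cons_Cons_cancel[of V Q Dl] walk_Dl_s Dl by (simp add: allowed_def)
      then show ?thesis
        using word_eq_trans[OF prefix[OF Dl_s]] s(1) Dl by blast
    qed
  qed
qed (intro exI[of _ "[]"], simp)

end

section \<open>The automorphism groups\<close>

lemma (in group) subgroup_generated_eq_self:
  assumes "S \<subseteq> carrier G" "carrier G \<subseteq> generate G S"
  shows "subgroup_generated G S = G"
proof -
  have "generate G S = carrier G"
    using generate_incl[OF assms(1)] assms(2) by blast
  then show ?thesis
    unfolding subgroup_generated_def using assms(1) by (simp add: Int_absorb1)
qed

locale loop_group = sym_graph +
  fixes wd :: bool and Q :: "('v \<times> 'v) set"
  assumes Q_subset_E: "Q \<subseteq> E"
begin

abbreviation "Aut \<equiv> Aut_grp wd V E Q"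
abbreviation "cls \<equiv> loop_class wd V E Q"
abbreviation "Loops \<equiv> loops wd V Q"

lemma loop_class_eq: "w \<in> Loops \<Longrightarrow> cls w = {w'. word_eq wd V E Q w w'}"
  unfolding loop_class_def using word_eq_loops[OF Q_subset_E] by blast

lemma loop_class_eq_iff:
  assumes "u \<in> Loops" "w \<in> Loops"
  shows "cls u = cls w \<longleftrightarrow> word_eq wd V E Q u w"
proof
  assume "cls u = cls w"
  then show "word_eq wd V E Q u w"
    using loop_class_eq[OF assms(1)] loop_class_eq[OF assms(2)] word_eq_refl[of wd V E Q w]
    by blast
next
  assume uw: "word_eq wd V E Q u w"
  have "word_eq wd V E Q u x \<longleftrightarrow> word_eq wd V E Q w x" for x
    using word_eq_trans[OF uw] word_eq_trans[OF word_eq_sym[OF uw]] by blast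
  then show "cls u = cls w"
    using loop_class_eq[OF assms(1)] loop_class_eq[OF assms(2)] by simp
qed

lemma Nil_in_loops: "[] \<in> Loops"
  unfolding loops_def by simp

lemma append_in_loops: "u \<in> Loops \<Longrightarrow> w \<in> Loops \<Longrightarrow> u @ w \<in> Loops"
  unfolding loops_def by (auto simp: walk_append)

lemma rev_in_loops: "w \<in> Loops \<Longrightarrow> rev w \<in> Loops"
  unfolding loops_def using walk_rev by fastforce

lemma word_eq_append_loops:
  assumes "u \<in> Loops" "w \<in> Loops" "word_eq wd V E Q u u'" "word_eq wd V E Q w w'"
  shows "word_eq wd V E Q (u @ w) (u' @ w')"
proof -
  have u': "u' \<in> Loops"
    using word_eq_loops[OF Q_subset_E assms(3)] assms(1) by simp
  have "walk V Q (u @ w) \<noteq> None"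
    using append_in_loops[OF assms(1,2)] unfolding loops_def by simp
  then have "word_eq wd V E Q (u @ w) (u' @ w)"
    using word_eq_append[OF Q_subset_E assms(3)] assms(2) unfolding loops_def by simp
  also have "word_eq wd V E Q \<dots> (u' @ w')"
    using word_eq_prefix[OF _ _ assms(4)] u' unfolding loops_def by simp
  finally show ?thesis .
qed

lemma loop_class_mult:
  assumes "u \<in> Loops" "w \<in> Loops"
  shows "cls u \<otimes>\<^bsub>Aut\<^esub> cls w = cls (u @ w)"
proof -
  have "cls (u @ w) = cls (u' @ w')" if "u' \<in> cls u" "w' \<in> cls w" for u' w'
  proof -
    have "word_eq wd V E Q u u'" "word_eq wd V E Q w w'"
      using that loop_class_eq assms by auto
    then have "word_eq wd V E Q (u @ w) (u' @ w')"
      using word_eq_append_loops[OF assms] by blast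
    moreover have "u' @ w' \<in> Loops"
      using that append_in_loops unfolding loop_class_def by blast
    ultimately show ?thesis
      using loop_class_eq_iff append_in_loops[OF assms] by blast
  qed
  moreover have "u \<in> cls u" "w \<in> cls w"
    using loop_class_eq assms by auto
  ultimately have "(\<Union>u'\<in>cls u. \<Union>w'\<in>cls w. cls (u' @ w')) = cls (u @ w)"
    by blast
  then show ?thesis
    unfolding Aut_grp_def by simp
qed

lemma carrier_Aut: "carrier Aut = cls ` Loops"
  unfolding Aut_grp_def by simp

lemma one_Aut: "\<one>\<^bsub>Aut\<^esub> = cls []"
  unfolding Aut_grp_def by simp

lemma loop_class_in_carrier: "w \<in> Loops \<Longrightarrow> cls w \<in> carrier Aut"
  by (simp add: carrier_Aut)

lemma rev_append_loop_class:
  assumes "w \<in> Loops"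
  shows "cls (rev w @ w) = cls []"
proof -
  have "rev w \<in> Loops" using rev_in_loops[OF assms] .
  then have "word_eq wd V E Q (rev w @ rev (rev w) @ []) []"
    using word_eq_cancel[of V Q "rev w" Q wd "[]" E] unfolding loops_def by simp
  then show ?thesis
    using loop_class_eq_iff append_in_loops[OF \<open>rev w \<in> Loops\<close> assms] Nil_in_loops by simp
qed

lemma group_Aut: "group Aut"
proof (rule groupI)
  show "\<one>\<^bsub>Aut\<^esub> \<in> carrier Aut"
    using one_Aut carrier_Aut Nil_in_loops by auto
next
  fix x y
  assume "x \<in> carrier Aut" "y \<in> carrier Aut"
  then obtain u w where "u \<in> Loops" "w \<in> Loops" "x = cls u" "y = cls w"
    using carrier_Aut by auto
  then show "x \<otimes>\<^bsub>Aut\<^esub> y \<in> carrier Aut"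
    using loop_class_mult append_in_loops loop_class_in_carrier by simp
next
  fix x y z
  assume "x \<in> carrier Aut" "y \<in> carrier Aut" "z \<in> carrier Aut"
  then obtain u v w where "u \<in> Loops" "v \<in> Loops" "w \<in> Loops" "x = cls u" "y = cls v" "z = cls w"
    using carrier_Aut by auto
  then show "x \<otimes>\<^bsub>Aut\<^esub> y \<otimes>\<^bsub>Aut\<^esub> z = x \<otimes>\<^bsub>Aut\<^esub> (y \<otimes>\<^bsub>Aut\<^esub> z)"
    using loop_class_mult append_in_loops by simp
next
  fix x
  assume "x \<in> carrier Aut"
  then obtain w where w: "w \<in> Loops" "x = cls w"
    using carrier_Aut by auto
  then show "\<one>\<^bsub>Aut\<^esub> \<otimes>\<^bsub>Aut\<^esub> x = x"
    using loop_class_mult Nil_in_loops one_Aut by simp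
  have "cls (rev w) \<otimes>\<^bsub>Aut\<^esub> x = \<one>\<^bsub>Aut\<^esub>"
    using w loop_class_mult rev_in_loops rev_append_loop_class one_Aut by simp
  then show "\<exists>x'\<in>carrier Aut. x' \<otimes>\<^bsub>Aut\<^esub> x = \<one>\<^bsub>Aut\<^esub>"
    using loop_class_in_carrier rev_in_loops w(1) by blast
qed

lemma loop_class_pow:
  assumes "w \<in> Loops"
  shows "cls w [^]\<^bsub>Aut\<^esub> (n::nat) = cls (concat (replicate n w))"
proof (induction n)
  case (Suc n)
  have "concat (replicate n w) \<in> Loops"
    using assms by (induction n) (auto intro: append_in_loops Nil_in_loops)
  then show ?case
    using Suc loop_class_mult[OF _ assms] by (simp add: replicate_append_same[symmetric])
qed (simp add: one_Aut)

end

section \<open>Sink-adapted and source-adapted words\<close>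

fun sink_adapted :: "'v set \<Rightarrow> ('v \<times> 'v) set \<Rightarrow> 'v gen list \<Rightarrow> bool" where
  "sink_adapted V Q [] \<longleftrightarrow> True"
| "sink_adapted V Q (Sig i # w) \<longleftrightarrow> i \<in> V \<and> is_sink Q i \<and> sink_adapted V (refl_at i Q) w"
| "sink_adapted V Q (Dl # w) \<longleftrightarrow> False"

fun source_adapted :: "'v set \<Rightarrow> ('v \<times> 'v) set \<Rightarrow> 'v gen list \<Rightarrow> bool" where
  "source_adapted V Q [] \<longleftrightarrow> True"
| "source_adapted V Q (Sig i # w) \<longleftrightarrow> i \<in> V \<and> is_source Q i \<and> source_adapted V (refl_at i Q) w"
| "source_adapted V Q (Dl # w) \<longleftrightarrow> False"

lemma sink_adapted_walk: "sink_adapted V Q w \<Longrightarrow> walk V Q w \<noteq> None"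
  by (induction V Q w rule: sink_adapted.induct) auto

lemma sink_adapted_Dl_free: "sink_adapted V Q w \<Longrightarrow> Dl \<notin> set w"
  by (induction V Q w rule: sink_adapted.induct) auto

lemma source_adapted_Dl_free: "source_adapted V Q w \<Longrightarrow> Dl \<notin> set w"
  by (induction V Q w rule: source_adapted.induct) auto

lemma Dl_free_allowed: "Dl \<notin> set w \<Longrightarrow> \<forall>g\<in>set w. allowed wd g"
  unfolding allowed_def by auto

lemma sink_adapted_append:
  "sink_adapted V Q (u @ w) \<longleftrightarrow>
     sink_adapted V Q u \<and> (\<exists>Q'. walk V Q u = Some Q' \<and> sink_adapted V Q' w)"
  by (induction V Q u rule: sink_adapted.induct) auto

lemma source_adapted_iff_sink_adapted_converse:
  "source_adapted V Q w \<longleftrightarrow> sink_adapted V (converse Q) w"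
  by (induction V Q w rule: source_adapted.induct) (auto simp: converse_refl_at)

lemma source_adapted_rev:
  "source_adapted V Q w \<Longrightarrow> walk V Q w = Some Q' \<Longrightarrow> sink_adapted V Q' (rev w)"
proof (induction V Q w rule: source_adapted.induct)
  case (2 V Q i w)
  then have "walk V Q' (rev w) = Some (refl_at i Q)"
    using walk_rev by fastforce
  with 2 show ?case by (auto simp: sink_adapted_append)
qed auto

lemma sink_adapted_count_outside:
  "sink_adapted V Q w \<Longrightarrow> x \<notin> V \<Longrightarrow> count_list w (Sig x) = 0"
  by (induction V Q w rule: sink_adapted.induct) auto

definition source_then_sink :: "'v set \<Rightarrow> ('v \<times> 'v) set \<Rightarrow> 'v gen list \<Rightarrow> 'v gen list \<Rightarrow> bool"
  where "source_then_sink V Q D U \<longleftrightarrow>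
    source_adapted V Q D \<and> (\<exists>Q'. walk V Q D = Some Q' \<and> sink_adapted V Q' U)"

lemma source_then_sink_walk:
  assumes "source_then_sink V Q D U"
  shows "walk V Q (D @ U) \<noteq> None" "\<forall>g\<in>set (D @ U). allowed wd g"
proof -
  obtain Q' where D: "source_adapted V Q D" "walk V Q D = Some Q'" and U: "sink_adapted V Q' U"
    using assms unfolding source_then_sink_def by blast
  show "walk V Q (D @ U) \<noteq> None"
    using D(2) sink_adapted_walk[OF U] by (simp add: walk_append)
  have "Dl \<notin> set (D @ U)"
    using source_adapted_Dl_free[OF D(1)] sink_adapted_Dl_free[OF U] by simp
  then show "\<forall>g\<in>set (D @ U). allowed wd g"
    by (rule Dl_free_allowed)
qed

context sym_graph
begin

lemma sink_adapted_move_to_front: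
  assumes "Q \<in> Quiv V E" "sink_adapted V Q (p @ Sig i # s)" "is_sink Q i" "Sig i \<notin> set p"
  shows "sink_adapted V Q (Sig i # p @ s) \<and>
    word_eq False V E Q (p @ Sig i # s) (Sig i # p @ s)"
  using assms
proof (induction p arbitrary: Q)
  case (Cons g p)
  then obtain a where g: "g = Sig a" by (cases g) auto
  with Cons.prems have a: "a \<in> V" "is_sink Q a" "a \<noteq> i"
    and rest: "sink_adapted V (refl_at a Q) (p @ Sig i # s)"
    by auto
  note QE = Quiv_subset[OF Cons.prems(1)]
  have ai: "(a, i) \<notin> E"
    using sinks_not_adjacent[OF Cons.prems(1) a(2) Cons.prems(3)] .
  then have "is_sink (refl_at a Q) i"
    using refl_at_nonadjacent(2)[OF QE ai a(3)] Cons.prems(3) by simp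
  then have IH: "sink_adapted V (refl_at a Q) (Sig i # p @ s)"
    "word_eq False V E (refl_at a Q) (p @ Sig i # s) (Sig i # p @ s)"
    using Cons.IH[OF refl_at_in_Quiv[OF Cons.prems(1)] rest] Cons.prems(4) g by auto
  have "(i, a) \<notin> E" using ai edge_sym by blast
  then have swapped: "sink_adapted V Q (Sig i # Sig a # p @ s)"
    using IH(1) Cons.prems(3) a refl_at_nonadjacent[OF QE ai a(3)]
      refl_at_nonadjacent(2)[OF QE _ a(3)[symmetric]] by simp
  have "word_eq False V E Q (Sig a # p @ Sig i # s) (Sig a # Sig i # p @ s)"
    using word_eq_prefix[of V Q "[Sig a]" "refl_at a Q" False] IH(2) a(1,2)
    by (simp add: allowed_def)
  also have "word_eq False V E Q \<dots> (Sig i # Sig a # p @ s)"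
  proof (rule word_eq_Sig_Sig_swap[OF ai])
    show "walk V Q (Sig a # Sig i # p @ s) \<noteq> None"
      using sink_adapted_walk[of V Q "Sig a # Sig i # p @ s"] IH(1) a(1,2) by simp
    show "walk V Q (Sig i # Sig a # p @ s) \<noteq> None"
      using sink_adapted_walk[OF swapped] .
    show "\<forall>g\<in>set (p @ s). allowed False g"
      using sink_adapted_Dl_free[OF swapped] by (auto simp: allowed_def)
  qed
  finally show ?case using swapped g by simp
qed simp

lemma sink_adapted_word_eq:
  assumes "Q \<in> Quiv V E" "sink_adapted V Q u" "sink_adapted V Q u'"
    and "\<And>x. count_list u (Sig x) = count_list u' (Sig x)"
  shows "word_eq False V E Q u u'"
  using assms
proof (induction u arbitrary: Q u')
  case (Cons g t)
  then obtain i where g: "g = Sig i" by (cases g) auto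
  with Cons.prems have i: "i \<in> V" "is_sink Q i" "sink_adapted V (refl_at i Q) t" by auto
  have "count_list u' (Sig i) \<noteq> 0"
    using Cons.prems(4)[of i] g by simp
  then obtain p s where u': "u' = p @ Sig i # s" "Sig i \<notin> set p"
    by (meson count_list_0_iff split_list_first)
  then have front: "sink_adapted V Q (Sig i # p @ s)"
    "word_eq False V E Q (p @ Sig i # s) (Sig i # p @ s)"
    using sink_adapted_move_to_front[OF Cons.prems(1) _ i(2)] Cons.prems(3) by auto
  have "count_list t (Sig x) = count_list (p @ s) (Sig x)" for x
    using Cons.prems(4)[of x] g u'(1) by (auto split: if_splits)
  then have "word_eq False V E (refl_at i Q) t (p @ s)"
    using Cons.IH[OF refl_at_in_Quiv[OF Cons.prems(1)] i(3)] front(1) by simp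
  then have "word_eq False V E Q (Sig i # t) (Sig i # p @ s)"
    using word_eq_prefix[of V Q "[Sig i]" "refl_at i Q" False] i by (simp add: allowed_def)
  also have "word_eq False V E Q \<dots> u'"
    using word_eq_sym[OF front(2)] u'(1) by simp
  finally show ?case using g by simp
next
  case Nil
  have "g \<notin> set u'" for g
    using Nil.prems(3,4) sink_adapted_Dl_free by (cases g) (auto simp: count_list_0_iff)
  then have "u' = []"
    by (cases u') auto
  then show ?case by simp
qed

lemma sink_then_source_commute:
  assumes "Q \<in> Quiv V E" "is_sink Q i" "is_source (refl_at i Q) j" "j \<noteq> i"
  shows "(i, j) \<notin> E" "is_source Q j" "is_sink (refl_at j Q) i"
    and "refl_at j (refl_at i Q) = refl_at i (refl_at j Q)"
proof -
  show ij: "(i, j) \<notin> E"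
    using sources_not_adjacent[OF refl_at_in_Quiv[OF assms(1)] _ assms(3)] assms(2) by simp
  then have "(j, i) \<notin> E" using edge_sym by blast
  then show "is_source Q j" "is_sink (refl_at j Q) i"
    and "refl_at j (refl_at i Q) = refl_at i (refl_at j Q)"
    using assms(2-4) refl_at_nonadjacent[OF Quiv_subset[OF assms(1)] ij assms(4)[symmetric]]
      refl_at_nonadjacent[OF Quiv_subset[OF assms(1)] _ assms(4)] by simp_all
qed

lemma source_then_sink_Cons_sink:
  assumes "Q \<in> Quiv V E" "i \<in> V" "is_sink Q i" "source_then_sink V (refl_at i Q) D U"
  shows "\<exists>D' U'. source_then_sink V Q D' U' \<and> word_eq False V E Q (Sig i # D @ U) (D' @ U')"
  using assms
proof (induction D arbitrary: Q)
  case Nil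
  then have "source_then_sink V Q [] (Sig i # U)"
    unfolding source_then_sink_def by simp
  then show ?case by force
next
  case (Cons g D)
  from Cons.prems(4) obtain j where g: "g = Sig j" and j: "j \<in> V" "is_source (refl_at i Q) j"
    and tail: "source_then_sink V (refl_at j (refl_at i Q)) D U"
    unfolding source_then_sink_def by (cases g) auto
  note tail_ok = source_then_sink_walk(1)[OF tail] source_then_sink_walk(2)[OF tail, of False]
  show ?case
  proof (cases "j = i")
    case True
    then have "word_eq False V E Q (Sig i # Sig i # D @ U) (D @ U)"
      using word_eq_Cons_Cons_cancel[of V Q "Sig i" "refl_at i Q" False] tail_ok Cons.prems(2,3)
      by (simp add: allowed_def)
    then show ?thesis using tail True g by auto
  next
    case False
    note commute = sink_then_source_commute[OF Cons.prems(1,3) j(2) False]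
    obtain D' U' where IH: "source_then_sink V (refl_at j Q) D' U'"
      "word_eq False V E (refl_at j Q) (Sig i # D @ U) (D' @ U')"
      using Cons.IH[OF refl_at_in_Quiv[OF Cons.prems(1)] Cons.prems(2) commute(3)] tail commute(4)
      by auto
    have "word_eq False V E Q (Sig i # Sig j # D @ U) (Sig j # Sig i # D @ U)"
      using word_eq_Sig_Sig_swap[OF commute(1)] tail_ok Cons.prems(2,3) j commute(2-4)
      by (simp add: allowed_def)
    also have "word_eq False V E Q \<dots> (Sig j # D' @ U')"
      using word_eq_prefix[of V Q "[Sig j]" "refl_at j Q" False] IH(2) j(1) commute(2)
      by (simp add: allowed_def)
    finally have "word_eq False V E Q (Sig i # (Sig j # D) @ U) ((Sig j # D') @ U')"
      by simp
    moreover have "source_then_sink V Q (Sig j # D') U'"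
      using IH(1) j(1) commute(2) unfolding source_then_sink_def by auto
    ultimately show ?thesis
      using g by blast
  qed
qed

lemma word_eq_source_then_sink:
  assumes "Q \<in> Quiv V E" "walk V Q w \<noteq> None" "Dl \<notin> set w"
  shows "\<exists>D U. source_then_sink V Q D U \<and> word_eq False V E Q w (D @ U)"
  using assms
proof (induction w arbitrary: Q)
  case Nil
  have "source_then_sink V Q [] []"
    unfolding source_then_sink_def by simp
  then show ?case by force
next
  case (Cons g w)
  from Cons.prems obtain i where g: "g = Sig i" by (cases g) auto
  with Cons.prems have i: "i \<in> V" "is_source Q i \<or> is_sink Q i"
    and tail: "walk V (refl_at i Q) w \<noteq> None" "Dl \<notin> set w"
    by (auto split: if_splits)
  obtain D U where IH: "source_then_sink V (refl_at i Q) D U"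
    "word_eq False V E (refl_at i Q) w (D @ U)"
    using Cons.IH[OF refl_at_in_Quiv[OF Cons.prems(1)] tail] by blast
  have "word_eq False V E Q (Sig i # w) (Sig i # D @ U)"
    using word_eq_prefix[of V Q "[Sig i]" "refl_at i Q" False] IH(2) i
    by (auto simp: allowed_def)
  show ?case
  proof (cases "is_sink Q i")
    case True
    then show ?thesis
      using source_then_sink_Cons_sink[OF Cons.prems(1) i(1) True IH(1)]
        \<open>word_eq False V E Q (Sig i # w) (Sig i # D @ U)\<close> g word_eq_trans by blast
  next
    case False
    then have "source_then_sink V Q (Sig i # D) U"
      using IH(1) i unfolding source_then_sink_def by auto
    then show ?thesis
      using \<open>word_eq False V E Q (Sig i # w) (Sig i # D @ U)\<close> g
      by (metis append_Cons)
  qed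
qed

lemma sink_adapted_arrow:
  assumes "Q \<in> Quiv V E" "sink_adapted V Q u" "walk V Q u = Some Q'" "(a, b) \<in> Q"
  shows "count_list u (Sig b) = count_list u (Sig a) \<and> (a, b) \<in> Q' \<or>
    count_list u (Sig b) = Suc (count_list u (Sig a)) \<and> (b, a) \<in> Q'"
  using assms
proof (induction u arbitrary: Q a b)
  case (Cons g u)
  then obtain i where g: "g = Sig i" and i: "i \<in> V" "is_sink Q i"
    and tail: "sink_adapted V (refl_at i Q) u" "walk V (refl_at i Q) u = Some Q'"
    by (cases g) auto
  note IH = Cons.IH[OF refl_at_in_Quiv[OF Cons.prems(1)] tail]
  have "a \<noteq> i"
    using i(2) Cons.prems(4) unfolding is_sink_def by blast
  show ?case
  proof (cases "b = i")
    case True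
    then have "(b, a) \<in> refl_at i Q"
      using Cons.prems(4) unfolding refl_at_def by blast
    then show ?thesis using IH[of b a] True \<open>a \<noteq> i\<close> g by auto
  next
    case False
    then have "(a, b) \<in> refl_at i Q"
      using Cons.prems(4) \<open>a \<noteq> i\<close> unfolding refl_at_def by blast
    then show ?thesis using IH[of a b] False \<open>a \<noteq> i\<close> g by auto
  qed
qed simp

lemma sink_adapted_target:
  assumes "Q \<in> Quiv V E" "sink_adapted V Q u" "walk V Q u = Some Q'" "P \<in> Quiv V E"
    and "\<And>a b. (a, b) \<in> P \<Longrightarrow>
      (a, b) \<in> Q \<and> count_list u (Sig b) = count_list u (Sig a) \<or>
      (b, a) \<in> Q \<and> count_list u (Sig a) = Suc (count_list u (Sig b))"
  shows "Q' = P"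
proof -
  have "(a, b) \<in> Q'" if ab: "(a, b) \<in> P" for a b
  proof -
    consider (same) "(a, b) \<in> Q" "count_list u (Sig b) = count_list u (Sig a)"
      | (flipped) "(b, a) \<in> Q" "count_list u (Sig a) = Suc (count_list u (Sig b))"
      using assms(5)[OF ab] by blast
    then show ?thesis
    proof cases
      case same
      then show ?thesis using sink_adapted_arrow[OF assms(1-3) same(1)] by auto
    next
      case flipped
      then show ?thesis using sink_adapted_arrow[OF assms(1-3) flipped(1)] by auto
    qed
  qed
  then have "P \<subseteq> Q'" by auto
  then show ?thesis
    using Quiv_eqI[OF assms(4) walk_in_Quiv[OF assms(1,3)]] by simp
qed

end

section \<open>Acyclic graphs\<close>

lemma has_cycle_if_nonbacktracking_walk:
  fixes x :: "nat \<Rightarrow> 'v"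
  assumes "finite V" "irrefl E" "\<And>n. x n \<in> V" "\<And>n. (x n, x (Suc n)) \<in> E"
    and "\<And>n. x (Suc (Suc n)) \<noteq> x n"
  shows "has_cycle V E"
proof -
  have "finite (range x)"
    using assms(1,3) by (meson finite_subset image_subsetI)
  then have "\<not> inj x"
    using finite_imageD by (metis infinite_UNIV_nat)
  then obtain i j where "i \<noteq> j" "x i = x j"
    unfolding inj_def by blast
  then have repeat: "\<exists>j. \<exists>i<j. x i = x j"
    by (metis linorder_neqE_nat)
  define j where "j = (LEAST j. \<exists>i<j. x i = x j)"
  obtain i where i: "i < j" "x i = x j"
    using LeastI_ex[OF repeat] unfolding j_def by blast
  have "x a \<noteq> x b" if "a < b" "b < j" for a b
    using Least_le[of "\<lambda>j. \<exists>i<j. x i = x j" b] that unfolding j_def by auto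
  then have "inj_on x {i..<j}"
    unfolding inj_on_def by (metis atLeastLessThan_iff linorder_neqE_nat)
  define xs where "xs = map x [i..<j]"
  have "j \<noteq> Suc i"
    using i assms(2) assms(4)[of i] unfolding irrefl_def by metis
  moreover have "j \<noteq> Suc (Suc i)"
    using i assms(5)[of i] by metis
  ultimately have "length xs \<ge> 3"
    using i(1) unfolding xs_def by simp
  moreover have "distinct xs"
    unfolding xs_def using \<open>inj_on x {i..<j}\<close> by (simp add: distinct_map)
  moreover have "set xs \<subseteq> V" "\<forall>k. Suc k < length xs \<longrightarrow> (xs ! k, xs ! Suc k) \<in> E"
    unfolding xs_def using assms(3,4) by (auto simp: add.commute)
  moreover have "(last xs, hd xs) \<in> E"
    using i assms(4)[of "j - 1"] unfolding xs_def by (simp add: last_map hd_map)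
  ultimately show ?thesis
    unfolding has_cycle_def by blast
qed

lemma has_cycle_mono: "V' \<subseteq> V \<Longrightarrow> E' \<subseteq> E \<Longrightarrow> has_cycle V' E' \<Longrightarrow> has_cycle V E"
  unfolding has_cycle_def by (meson order_trans subsetD)

lemma leaf_exists:
  assumes "finite V" "V \<noteq> {}" "is_graph V E" "\<not> has_cycle V E"
  shows "\<exists>v\<in>V. \<forall>u w. (v, u) \<in> E \<longrightarrow> (v, w) \<in> E \<longrightarrow> u = w"
proof (rule ccontr)
  assume "\<not> ?thesis"
  then have "\<forall>v\<in>V. \<forall>p. \<exists>u. (v, u) \<in> E \<and> u \<noteq> p"
    by metis
  then obtain nxt where nxt: "\<And>v p. v \<in> V \<Longrightarrow> (v, nxt v p) \<in> E \<and> nxt v p \<noteq> p"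
    by metis
  obtain v0 where "v0 \<in> V" using assms(2) by blast
  then obtain v1 where "(v0, v1) \<in> E" using nxt by blast
  define z where "z n = ((\<lambda>(p, v). (v, nxt v p)) ^^ n) (v0, v1)" for n
  have z_Suc: "z (Suc n) = (snd (z n), nxt (snd (z n)) (fst (z n)))" for n
    unfolding z_def by (simp add: case_prod_beta)
  have EV: "E \<subseteq> V \<times> V" and irr: "irrefl E"
    using assms(3) unfolding is_graph_def by auto
  have z_edge: "fst (z n) \<in> V \<and> (fst (z n), snd (z n)) \<in> E" for n
  proof (induction n)
    case (Suc n)
    then show ?case using nxt EV z_Suc by auto
  qed (use \<open>v0 \<in> V\<close> \<open>(v0, v1) \<in> E\<close> in \<open>simp add: z_def\<close>)
  have "has_cycle V E"
  proof (rule has_cycle_if_nonbacktracking_walk[OF assms(1) irr])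
    show "fst (z n) \<in> V" "(fst (z n), fst (z (Suc n))) \<in> E" for n
      using z_edge z_Suc by auto
    show "fst (z (Suc (Suc n))) \<noteq> fst (z n)" for n
      using z_edge[of n] nxt EV z_Suc by auto
  qed
  then show False using assms(4) by blast
qed

lemma (in sym_graph) height_extend_to_leaf:
  assumes "Q \<in> Quiv V E" "\<forall>u w. (v, u) \<in> E \<longrightarrow> (v, w) \<in> E \<longrightarrow> u = w"
    and "\<forall>(a, b)\<in>Q. a \<noteq> v \<longrightarrow> b \<noteq> v \<longrightarrow> h a = h b + (1::int)"
  shows "\<exists>h'::'v \<Rightarrow> int. \<forall>(a, b)\<in>Q. h' a = h' b + 1"
proof -
  define u where "u = (SOME u. (v, u) \<in> E)"
  have neighbour: "x = u" if "(v, x) \<in> E" for x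
    using assms(2) someI[of "\<lambda>u. (v, u) \<in> E", OF that] that unfolding u_def by blast
  define h' where "h' = h(v := if (v, u) \<in> Q then h u + 1 else h u - 1)"
  have "h' a = h' b + 1" if ab: "(a, b) \<in> Q" for a b
  proof -
    have "(a, b) \<in> E" "(b, a) \<notin> Q"
      using ab Quiv_subset[OF assms(1)] Quiv_not_both[OF assms(1)] by blast+
    then have "a \<noteq> b" and "a = v \<Longrightarrow> b = u" and "b = v \<Longrightarrow> a = u"
      using ab neighbour edge_sym by blast+
    then show ?thesis
      using ab \<open>(b, a) \<notin> Q\<close> assms(3) unfolding h'_def by (cases "a = v \<or> b = v") auto
  qed
  then show ?thesis by blast
qed

lemma induced_subgraph:
  assumes "is_graph V E" "\<not> has_cycle V E" "Q \<in> Quiv V E" "V' \<subseteq> V"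
  shows "is_graph V' (E \<inter> V' \<times> V')" "\<not> has_cycle V' (E \<inter> V' \<times> V')"
    and "Q \<inter> V' \<times> V' \<in> Quiv V' (E \<inter> V' \<times> V')"
  using assms has_cycle_mono[of V' V "E \<inter> V' \<times> V'" E]
  unfolding is_graph_def sym_def irrefl_def Quiv_def by auto

lemma height_exists:
  assumes "finite V" "is_graph V E" "\<not> has_cycle V E" "Q \<in> Quiv V E"
  shows "\<exists>h::'v \<Rightarrow> int. \<forall>(a, b)\<in>Q. h a = h b + 1"
  using assms
proof (induction "card V" arbitrary: V E Q rule: less_induct)
  case less
  have EV: "E \<subseteq> V \<times> V" and "sym E"
    using less.prems(2) unfolding is_graph_def by auto
  have QE: "Q \<subseteq> E" using less.prems(4) unfolding Quiv_def by blast
  show ?case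
  proof (cases "V = {}")
    case True
    then show ?thesis using QE EV by auto
  next
    case False
    then obtain v where v: "v \<in> V" "\<forall>u w. (v, u) \<in> E \<longrightarrow> (v, w) \<in> E \<longrightarrow> u = w"
      using leaf_exists less.prems(1-3) by blast
    define V' where "V' = V - {v}"
    have "card V' < card V"
      unfolding V'_def using card_Diff1_less[OF less.prems(1) v(1)] .
    then obtain h :: "'v \<Rightarrow> int" where "\<forall>(a, b)\<in>Q \<inter> V' \<times> V'. h a = h b + 1"
      using less.hyps induced_subgraph[OF less.prems(2-4), of V'] less.prems(1)
      unfolding V'_def by (metis Diff_subset finite_Diff)
    then have "\<forall>(a, b)\<in>Q. a \<noteq> v \<longrightarrow> b \<noteq> v \<longrightarrow> h a = h b + 1"
      using QE EV unfolding V'_def by auto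
    then show ?thesis
      using sym_graph.height_extend_to_leaf[OF _ less.prems(4) v(2)] \<open>sym E\<close>
      unfolding sym_graph_def by blast
  qed
qed

section \<open>Orientations of a finite tree\<close>

locale finite_tree =
  fixes V :: "'v set" and E :: "('v \<times> 'v) set"
  assumes finite_tree: "is_finite_tree V E"

sublocale finite_tree \<subseteq> sym_graph
  using finite_tree unfolding is_finite_tree_def is_graph_def by unfold_locales blast

text \<open>The occurrence counts of sink-adapted words starting at Q are exactly the admissible
  count vectors: necessity is sink_adapted_arrow, sufficiency sink_adapted_exists.\<close>
definition admissible_counts :: "('v \<times> 'v) set \<Rightarrow> ('v \<Rightarrow> nat) \<Rightarrow> bool" where
  "admissible_counts Q c \<longleftrightarrow> (\<forall>(a, b)\<in>Q. c b = c a \<or> c b = Suc (c a))"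

context finite_tree
begin

lemma finite_V: "finite V"
  using finite_tree unfolding is_finite_tree_def by blast

lemma E_subset: "E \<subseteq> V \<times> V"
  using finite_tree unfolding is_finite_tree_def is_graph_def by blast

lemma exists_sink_in_subset:
  assumes "Q \<in> Quiv V E" "R \<subseteq> V" "R \<noteq> {}"
  shows "\<exists>r\<in>R. \<forall>y\<in>R. (r, y) \<notin> Q"
proof (rule ccontr)
  assume "\<not> ?thesis"
  then obtain f where f: "\<And>r. r \<in> R \<Longrightarrow> f r \<in> R \<and> (r, f r) \<in> Q"
    by metis
  obtain r0 where "r0 \<in> R" using assms(3) by blast
  define x where "x n = (f ^^ n) r0" for n
  have x_in_R: "x n \<in> R" for n
    unfolding x_def by (induction n) (use \<open>r0 \<in> R\<close> f in auto)
  have x_arrow: "(x n, x (Suc n)) \<in> Q" for n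
    using f x_in_R[of n] unfolding x_def by simp
  have "has_cycle V E"
  proof (rule has_cycle_if_nonbacktracking_walk[OF finite_V])
    show "irrefl E"
      using finite_tree unfolding is_finite_tree_def is_graph_def by blast
    show "x n \<in> V" "(x n, x (Suc n)) \<in> E" for n
      using x_in_R assms(2) x_arrow Quiv_subset[OF assms(1)] by blast+
    show "x (Suc (Suc n)) \<noteq> x n" for n
      using x_arrow[of n] x_arrow[of "Suc n"] Quiv_not_both[OF assms(1)] by metis
  qed
  then show False
    using finite_tree unfolding is_finite_tree_def by blast
qed

lemma exists_sink_with_positive_count:
  assumes "Q \<in> Quiv V E" "admissible_counts Q c" "\<exists>v\<in>V. c v \<noteq> 0"
  shows "\<exists>r\<in>V. is_sink Q r \<and> c r \<noteq> 0"
proof -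
  define m where "m = Max (c ` V)"
  define M where "M = {v \<in> V. c v = m}"
  have max: "c v \<le> m" if "v \<in> V" for v
    unfolding m_def using finite_V that by simp
  have "m \<in> c ` V"
    unfolding m_def using finite_V assms(3) by (intro Max_in) auto
  then have "M \<noteq> {}"
    unfolding M_def by auto
  moreover have "M \<subseteq> V"
    unfolding M_def by blast
  ultimately obtain r where "r \<in> M" and r_sink_in_M: "\<forall>y\<in>M. (r, y) \<notin> Q"
    using exists_sink_in_subset[OF assms(1)] by blast
  then have r: "r \<in> V" "c r = m"
    unfolding M_def by auto
  have "is_sink Q r"
    unfolding is_sink_def
  proof (intro allI notI)
    fix j assume rj: "(r, j) \<in> Q"
    then have "j \<in> V"
      using Quiv_subset[OF assms(1)] E_subset by blast
    moreover have "c j = c r \<or> c j = Suc (c r)"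
      using assms(2) rj unfolding admissible_counts_def by auto
    ultimately have "j \<in> M"
      using max[of j] r(2) unfolding M_def by auto
    then show False using r_sink_in_M rj by blast
  qed
  moreover have "c r \<noteq> 0"
  proof -
    obtain v where "v \<in> V" "c v \<noteq> 0"
      using assms(3) by blast
    then show ?thesis using max[of v] r(2) by simp
  qed
  ultimately show ?thesis using r(1) by blast
qed

lemma admissible_counts_refl_at:
  assumes "Q \<in> Quiv V E" "admissible_counts Q c" "is_sink Q r" "c r \<noteq> 0"
  shows "admissible_counts (refl_at r Q) (c(r := c r - 1))"
proof -
  let ?c = "c(r := c r - 1)"
  have "?c b = ?c a \<or> ?c b = Suc (?c a)" if ab: "(a, b) \<in> refl_at r Q" for a b
  proof (cases "a = r \<or> b = r")
    case True
    then have "(b, a) \<in> Q" using ab unfolding refl_at_def by auto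
    then have "a = r" "b \<noteq> r"
      using True assms(3) Quiv_not_both[OF assms(1)] unfolding is_sink_def by auto
    then show ?thesis
      using assms(2,4) \<open>(b, a) \<in> Q\<close> unfolding admissible_counts_def by auto
  next
    case False
    then have "(a, b) \<in> Q" using ab unfolding refl_at_def by auto
    then show ?thesis
      using assms(2) False unfolding admissible_counts_def by auto
  qed
  then show ?thesis
    unfolding admissible_counts_def by blast
qed

lemma sink_adapted_exists:
  assumes "Q \<in> Quiv V E" "\<forall>v. v \<notin> V \<longrightarrow> c v = 0" "admissible_counts Q c"
  shows "\<exists>u. sink_adapted V Q u \<and> (\<forall>x. count_list u (Sig x) = c x)"
  using assms
proof (induction "sum c V" arbitrary: Q c rule: less_induct)
  case less
  show ?case
  proof (cases "\<forall>v\<in>V. c v = 0")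
    case True
    then have "\<forall>x. count_list [] (Sig x) = c x"
      using less.prems(2) by auto
    then show ?thesis by (metis sink_adapted.simps(1))
  next
    case False
    then obtain r where r: "r \<in> V" "is_sink Q r" "c r \<noteq> 0"
      using exists_sink_with_positive_count[OF less.prems(1,3)] by blast
    define c' where "c' = c(r := c r - 1)"
    have "sum c' V < sum c V"
      using sum_strict_mono_ex1[OF finite_V, of c' c] r unfolding c'_def by auto
    moreover have "\<forall>v. v \<notin> V \<longrightarrow> c' v = 0"
      using less.prems(2) r(1) unfolding c'_def by auto
    ultimately obtain u where u: "sink_adapted V (refl_at r Q) u" "\<forall>x. count_list u (Sig x) = c' x"
      using less.hyps[OF _ refl_at_in_Quiv[OF less.prems(1)]]
        admissible_counts_refl_at[OF less.prems(1,3) r(2,3)] unfolding c'_def by blast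
    then have "sink_adapted V Q (Sig r # u) \<and> (\<forall>x. count_list (Sig r # u) (Sig x) = c x)"
      using r unfolding c'_def by auto
    then show ?thesis by blast
  qed
qed

lemma sink_adapted_counts_differ_by_constant:
  assumes "Q \<in> Quiv V E" "sink_adapted V Q u" "walk V Q u = Some Q'"
    and "sink_adapted V Q w" "walk V Q w = Some Q'"
  shows "\<exists>k::int. \<forall>x\<in>V. int (count_list u (Sig x)) = int (count_list w (Sig x)) + k"
proof -
  define \<delta> where "\<delta> x = int (count_list u (Sig x)) - int (count_list w (Sig x))" for x
  have Q': "Q' \<in> Quiv V E" using walk_in_Quiv[OF assms(1,3)] .
  have arrow: "\<delta> a = \<delta> b" if "(a, b) \<in> Q" for a b
    using sink_adapted_arrow[OF assms(1-3) that] sink_adapted_arrow[OF assms(1,4,5) that]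
      Quiv_not_both[OF Q', of a b] unfolding \<delta>_def by auto
  have edge: "\<delta> a = \<delta> b" if "(a, b) \<in> E" for a b
    using Quiv_edge_iff[OF assms(1) that] arrow[of a b] arrow[of b a] by metis
  obtain v0 where "v0 \<in> V"
    using finite_tree unfolding is_finite_tree_def by blast
  have \<delta>_const: "\<delta> x = \<delta> v0" if "x \<in> V" for x
  proof -
    have "(v0, x) \<in> E\<^sup>*"
      using finite_tree \<open>v0 \<in> V\<close> that unfolding is_finite_tree_def by blast
    then show ?thesis
      by (induction rule: rtrancl_induct) (auto dest: edge)
  qed
  have "\<forall>x\<in>V. int (count_list u (Sig x)) = int (count_list w (Sig x)) + \<delta> v0"
  proof
    fix x assume "x \<in> V"
    then show "int (count_list u (Sig x)) = int (count_list w (Sig x)) + \<delta> v0"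
      using \<delta>_const[of x] unfolding \<delta>_def by simp
  qed
  then show ?thesis by blast
qed

end

section \<open>The Coxeter element\<close>

locale oriented_tree = finite_tree +
  fixes \<Gamma> :: "('v \<times> 'v) set"
  assumes \<Gamma>_in_Quiv: "\<Gamma> \<in> Quiv V E"
begin

lemma \<Gamma>_subset: "\<Gamma> \<subseteq> E"
  using Quiv_subset[OF \<Gamma>_in_Quiv] .

lemma coxeter_word_exists:
  "\<exists>c. sink_adapted V \<Gamma> c \<and> walk V \<Gamma> c = Some \<Gamma> \<and>
    (\<forall>x. count_list c (Sig x) = (if x \<in> V then 1 else 0))"
proof -
  let ?c = "\<lambda>x. if x \<in> V then 1 else 0 :: nat"
  have "admissible_counts \<Gamma> ?c"
    using \<Gamma>_subset E_subset unfolding admissible_counts_def by auto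
  then obtain c where c: "sink_adapted V \<Gamma> c" "\<forall>x. count_list c (Sig x) = ?c x"
    using sink_adapted_exists[OF \<Gamma>_in_Quiv, of ?c] by auto
  moreover obtain \<Gamma>' where walk: "walk V \<Gamma> c = Some \<Gamma>'"
    using sink_adapted_walk[OF c(1)] by blast
  moreover have "count_list c (Sig b) = count_list c (Sig a)" if "(a, b) \<in> \<Gamma>" for a b
    using c(2) that \<Gamma>_subset E_subset by auto
  then have "\<Gamma>' = \<Gamma>"
    using sink_adapted_target[OF \<Gamma>_in_Quiv c(1) walk \<Gamma>_in_Quiv] by blast
  ultimately show ?thesis by auto
qed

definition coxeter_word :: "'v gen list" where
  "coxeter_word = (SOME c. sink_adapted V \<Gamma> c \<and> walk V \<Gamma> c = Some \<Gamma> \<and>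
    (\<forall>x. count_list c (Sig x) = (if x \<in> V then 1 else 0)))"

definition coxeter_power :: "nat \<Rightarrow> 'v gen list" where
  "coxeter_power k = concat (replicate k coxeter_word)"

lemma coxeter_word:
  "sink_adapted V \<Gamma> coxeter_word" "walk V \<Gamma> coxeter_word = Some \<Gamma>"
  "count_list coxeter_word (Sig x) = (if x \<in> V then 1 else 0)"
  using someI_ex[OF coxeter_word_exists] unfolding coxeter_word_def by blast+

lemma coxeter_power:
  "sink_adapted V \<Gamma> (coxeter_power k)" "walk V \<Gamma> (coxeter_power k) = Some \<Gamma>"
  "count_list (coxeter_power k) (Sig x) = (if x \<in> V then k else 0)"
  by (induction k)
    (use coxeter_word in \<open>auto simp: coxeter_power_def sink_adapted_append walk_append\<close>)

lemma coxeter_power_allowed: "\<forall>g\<in>set (coxeter_power n). allowed wd g"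
  using Dl_free_allowed sink_adapted_Dl_free[OF coxeter_power(1)] by blast

lemma sink_adapted_word_eq_append_coxeter_power:
  assumes "Q \<in> Quiv V E" "sink_adapted V Q u" "sink_adapted V Q w" "walk V Q w = Some \<Gamma>"
    and "\<forall>x\<in>V. count_list u (Sig x) = count_list w (Sig x) + k"
  shows "word_eq False V E Q u (w @ coxeter_power k)"
proof (rule sink_adapted_word_eq[OF assms(1,2)])
  show "sink_adapted V Q (w @ coxeter_power k)"
    using assms(3,4) coxeter_power(1) by (simp add: sink_adapted_append)
  show "count_list u (Sig x) = count_list (w @ coxeter_power k) (Sig x)" for x
    using assms(5) sink_adapted_count_outside[OF assms(2)] sink_adapted_count_outside[OF assms(3)]
      coxeter_power(3) by (cases "x \<in> V") auto
qed

lemma source_sink_word_eq_coxeter_power: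
  assumes D: "source_adapted V \<Gamma> D" "walk V \<Gamma> D = Some Q"
    and U: "sink_adapted V Q U" "walk V Q U = Some \<Gamma>"
    and counts: "\<forall>x\<in>V. count_list U (Sig x) = count_list (rev D) (Sig x) + n"
  shows "word_eq False V E \<Gamma> (D @ U) (coxeter_power n)"
proof -
  have D_allowed: "\<forall>g\<in>set D. allowed False g"
    using Dl_free_allowed source_adapted_Dl_free[OF D(1)] by blast
  have "word_eq False V E Q U (rev D @ coxeter_power n)"
    using sink_adapted_word_eq_append_coxeter_power[OF walk_in_Quiv[OF \<Gamma>_in_Quiv D(2)] U(1)
        source_adapted_rev[OF D] walk_rev[OF D(2)] counts] .
  then have "word_eq False V E \<Gamma> (D @ U) (D @ rev D @ coxeter_power n)"
    using word_eq_prefix[OF D(2) D_allowed] by blast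
  also have "word_eq False V E \<Gamma> \<dots> (coxeter_power n)"
    using word_eq_cancel[OF D(2) D_allowed _ coxeter_power_allowed] coxeter_power(2) by simp
  finally show ?thesis .
qed

lemma source_sink_coxeter_power_word_eq_Nil:
  assumes D: "source_adapted V \<Gamma> D" "walk V \<Gamma> D = Some Q"
    and U: "sink_adapted V Q U" "walk V Q U = Some \<Gamma>"
    and counts: "\<forall>x\<in>V. count_list (rev D) (Sig x) = count_list U (Sig x) + n"
  shows "word_eq False V E \<Gamma> (D @ U @ coxeter_power n) []"
proof -
  have D_allowed: "\<forall>g\<in>set D. allowed False g"
    using Dl_free_allowed source_adapted_Dl_free[OF D(1)] by blast
  have "word_eq False V E Q (rev D) (U @ coxeter_power n)"
    using sink_adapted_word_eq_append_coxeter_power[OF walk_in_Quiv[OF \<Gamma>_in_Quiv D(2)]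
        source_adapted_rev[OF D] U counts] .
  then have "word_eq False V E \<Gamma> (D @ U @ coxeter_power n) (D @ rev D @ [])"
    using word_eq_prefix[OF D(2) D_allowed] word_eq_sym by fastforce
  also have "word_eq False V E \<Gamma> \<dots> []"
    using word_eq_cancel[OF D(2) D_allowed, of "[]"] by simp
  finally show ?thesis .
qed

lemma sigma_loop_word_eq_coxeter_power:
  assumes "walk V \<Gamma> w = Some \<Gamma>" "Dl \<notin> set w"
  shows "(\<exists>n. word_eq False V E \<Gamma> w (coxeter_power n)) \<or>
    (\<exists>n. word_eq False V E \<Gamma> (w @ coxeter_power n) [])"
proof -
  obtain D U where DU: "source_then_sink V \<Gamma> D U" "word_eq False V E \<Gamma> w (D @ U)"
    using word_eq_source_then_sink[OF \<Gamma>_in_Quiv _ assms(2)] assms(1) by blast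
  then obtain Q where D: "source_adapted V \<Gamma> D" "walk V \<Gamma> D = Some Q"
    and U: "sink_adapted V Q U"
    unfolding source_then_sink_def by blast
  have "walk V \<Gamma> (D @ U) = Some \<Gamma>"
    using word_eq_walk[OF \<Gamma>_subset DU(2)] assms(1) by simp
  then have U_walk: "walk V Q U = Some \<Gamma>"
    using D(2) by (simp add: walk_append)
  obtain k where k: "\<forall>x\<in>V. int (count_list U (Sig x)) = int (count_list (rev D) (Sig x)) + k"
    using sink_adapted_counts_differ_by_constant[OF walk_in_Quiv[OF \<Gamma>_in_Quiv D(2)] U U_walk
        source_adapted_rev[OF D] walk_rev[OF D(2)]] by blast
  show ?thesis
  proof (cases "k \<ge> 0")
    case True
    then have "word_eq False V E \<Gamma> (D @ U) (coxeter_power (nat k))"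
      using source_sink_word_eq_coxeter_power[OF D U U_walk] k by force
    then show ?thesis
      using DU(2) word_eq_trans by blast
  next
    case False
    then have "word_eq False V E \<Gamma> (D @ U @ coxeter_power (nat (- k))) []"
      using source_sink_coxeter_power_word_eq_Nil[OF D U U_walk] k by force
    moreover have "word_eq False V E \<Gamma> (w @ coxeter_power n) (D @ U @ coxeter_power n)" for n
      using word_eq_append[OF \<Gamma>_subset DU(2) _ coxeter_power_allowed] assms(1) coxeter_power(2)
      by (simp add: walk_append)
    ultimately show ?thesis
      using word_eq_trans by blast
  qed
qed

lemma sigma_loop_in_generate:
  assumes "walk V \<Gamma> w = Some \<Gamma>" "Dl \<notin> set w"
  shows "loop_class wd V E \<Gamma> w \<in>
    generate (Aut_grp wd V E \<Gamma>) {loop_class wd V E \<Gamma> coxeter_word}"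
proof -
  interpret loop_group V E wd \<Gamma>
    by unfold_locales (fact \<Gamma>_subset)
  interpret Aut: group Aut
    by (fact group_Aut)
  have loops: "w \<in> Loops" "coxeter_word \<in> Loops" "coxeter_power n \<in> Loops" for n
    using assms coxeter_word coxeter_power Dl_free_allowed sink_adapted_Dl_free
    unfolding loops_def by blast+
  have power: "cls (coxeter_power n) = cls coxeter_word [^]\<^bsub>Aut\<^esub> n" for n
    using loop_class_pow[OF loops(2)] unfolding coxeter_power_def by simp
  have in_gen: "cls (coxeter_power n) \<in> generate Aut {cls coxeter_word}" for n
    unfolding power by (induction n) (auto intro: generate.intros)
  from sigma_loop_word_eq_coxeter_power[OF assms] show ?thesis
  proof (elim disjE exE)
    fix k assume "word_eq False V E \<Gamma> w (coxeter_power k)"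
    then have "cls w = cls (coxeter_power k)"
      using loop_class_eq_iff[OF loops(1,3)] word_eq_mono by blast
    then show ?thesis using in_gen by simp
  next
    fix k assume "word_eq False V E \<Gamma> (w @ coxeter_power k) []"
    then have "cls (w @ coxeter_power k) = cls []"
      using loop_class_eq_iff[OF append_in_loops[OF loops(1,3)] Nil_in_loops] word_eq_mono by blast
    then have "cls w \<otimes>\<^bsub>Aut\<^esub> cls (coxeter_power k) = \<one>\<^bsub>Aut\<^esub>"
      using loop_class_mult[OF loops(1,3)] one_Aut by simp
    then have "cls w = inv\<^bsub>Aut\<^esub> cls (coxeter_power k)"
      using Aut.inv_equality loop_class_in_carrier loops by metis
    then show ?thesis
      using Aut.generate_m_inv_closed[OF _ in_gen] loop_class_in_carrier[OF loops(2)] by simp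
  qed
qed

theorem cyclic_group_Aut_R0: "group (Aut_R0 V E \<Gamma>) \<and> cyclic_group (Aut_R0 V E \<Gamma>)"
proof -
  interpret loop_group V E False \<Gamma>
    by unfold_locales (fact \<Gamma>_subset)
  interpret Aut: group Aut
    by (fact group_Aut)
  have c: "cls coxeter_word \<in> carrier Aut"
    using coxeter_word loop_class_in_carrier sink_adapted_Dl_free Dl_free_allowed
    unfolding loops_def by blast
  have "carrier Aut \<subseteq> generate Aut {cls coxeter_word}"
    using sigma_loop_in_generate unfolding carrier_Aut loops_def allowed_def by blast
  then have "subgroup_generated Aut {cls coxeter_word} = Aut"
    using Aut.subgroup_generated_eq_self c by blast
  then show ?thesis
    unfolding cyclic_group_def using group_Aut c by blast
qed

text \<open>A height function, shifted to be nonnegative, is an admissible count vector for the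
  opposite orientation whose sink-adapted word reverses every arrow.\<close>
lemma reversing_word_exists:
  "\<exists>p. sink_adapted V (converse \<Gamma>) p \<and> walk V (converse \<Gamma>) p = Some \<Gamma>"
proof -
  obtain h :: "'v \<Rightarrow> int" where h: "\<forall>(a, b)\<in>\<Gamma>. h a = h b + 1"
    using height_exists[OF finite_V _ _ \<Gamma>_in_Quiv] finite_tree
    unfolding is_finite_tree_def by blast
  define c where "c v = (if v \<in> V then nat (h v - Min (h ` V)) else 0)" for v
  have "Min (h ` V) \<le> h v" if "v \<in> V" for v
    using finite_V that by simp
  then have c_arrow: "c a = Suc (c b)" if "(a, b) \<in> \<Gamma>" for a b
    using h that \<Gamma>_subset E_subset unfolding c_def by fastforce
  then have "admissible_counts (converse \<Gamma>) c"
    unfolding admissible_counts_def by auto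
  then obtain p where p: "sink_adapted V (converse \<Gamma>) p" "\<forall>x. count_list p (Sig x) = c x"
    using sink_adapted_exists[OF converse_in_Quiv[OF \<Gamma>_in_Quiv], of c] unfolding c_def by auto
  moreover obtain \<Gamma>' where walk: "walk V (converse \<Gamma>) p = Some \<Gamma>'"
    using sink_adapted_walk[OF p(1)] by blast
  moreover have "\<Gamma>' = \<Gamma>"
    using sink_adapted_target[OF converse_in_Quiv[OF \<Gamma>_in_Quiv] p(1) walk \<Gamma>_in_Quiv] c_arrow p(2)
    by auto
  ultimately show ?thesis by auto
qed

definition reversing_word :: "'v gen list" where
  "reversing_word = (SOME p. sink_adapted V (converse \<Gamma>) p \<and> walk V (converse \<Gamma>) p = Some \<Gamma>)"

lemma reversing_word:
  "sink_adapted V (converse \<Gamma>) reversing_word" "walk V (converse \<Gamma>) reversing_word = Some \<Gamma>"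
  using someI_ex[OF reversing_word_exists] unfolding reversing_word_def by blast+

lemma Dl_reversing_square_word_eq:
  assumes "sink_adapted V (converse \<Gamma>) t" "walk V (converse \<Gamma>) t = Some \<Gamma>"
  shows "word_eq True V E \<Gamma> (Dl # t @ Dl # t) []"
proof -
  have t_allowed: "\<forall>g\<in>set t. allowed wd g" for wd
    using Dl_free_allowed sink_adapted_Dl_free[OF assms(1)] by blast
  have t_walk: "walk V \<Gamma> t = Some (converse \<Gamma>)"
    using walk_converse[of V "converse \<Gamma>" t] assms(2) by simp
  have "walk V (converse \<Gamma>) (t @ Dl # t) \<noteq> None"
    using assms(2) t_walk by (simp add: walk_append)
  then have "word_eq True V E (converse \<Gamma>) (t @ Dl # t) (Dl # t @ t)"
    using word_eq_Dl_commute sink_adapted_Dl_free[OF assms(1)] by blast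
  then have "word_eq True V E \<Gamma> (Dl # t @ Dl # t) (Dl # Dl # t @ t)"
    using word_eq_prefix[of V \<Gamma> "[Dl]" "converse \<Gamma>" True] by (simp add: allowed_def)
  also have "word_eq True V E \<Gamma> \<dots> (t @ t)"
    using word_eq_Cons_Cons_cancel[of V \<Gamma> Dl] t_walk assms(2) t_allowed
    by (simp add: walk_append allowed_def)
  also have "word_eq True V E \<Gamma> \<dots> (t @ rev t)"
  proof -
    have "source_adapted V \<Gamma> t"
      using assms(1) source_adapted_iff_sink_adapted_converse by blast
    then have "sink_adapted V (converse \<Gamma>) (rev t)"
      using source_adapted_rev t_walk by blast
    then have "word_eq False V E (converse \<Gamma>) t (rev t)"
      using sink_adapted_word_eq[OF converse_in_Quiv[OF \<Gamma>_in_Quiv] assms(1)] by simp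
    then show ?thesis
      using word_eq_prefix[OF t_walk t_allowed] word_eq_mono by blast
  qed
  also have "word_eq True V E \<Gamma> \<dots> []"
    using word_eq_cancel[OF t_walk t_allowed, of "[]"] by simp
  finally show ?thesis .
qed

lemma Dl_reversing_involution:
  assumes "sink_adapted V (converse \<Gamma>) t" "walk V (converse \<Gamma>) t = Some \<Gamma>"
  shows "is_involution (Aut_R V E \<Gamma>) (loop_class True V E \<Gamma> (Dl # t))"
proof -
  interpret loop_group V E True \<Gamma>
    by unfold_locales (fact \<Gamma>_subset)
  have loop: "Dl # t \<in> Loops"
    using assms(2) unfolding loops_def allowed_def by simp
  have "cls (Dl # t) \<otimes>\<^bsub>Aut\<^esub> cls (Dl # t) = \<one>\<^bsub>Aut\<^esub>"
    using Dl_reversing_square_word_eq[OF assms] loop_class_mult[OF loop loop] one_Aut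
      loop_class_eq_iff[OF append_in_loops[OF loop loop] Nil_in_loops] by simp
  moreover have "cls (Dl # t) \<noteq> cls []"
  proof
    assume "cls (Dl # t) = cls []"
    then have "word_eq True V E \<Gamma> (Dl # t) []"
      using loop_class_eq_iff[OF loop Nil_in_loops] by simp
    then show False
      using word_eq_even_Dl_count sink_adapted_Dl_free[OF assms(1)] by fastforce
  qed
  ultimately show ?thesis
    unfolding is_involution_def using loop_class_in_carrier[OF loop] one_Aut by simp
qed

lemma Dl_loop_class_decompose:
  assumes "walk V (converse \<Gamma>) s = Some \<Gamma>"
  shows "loop_class True V E \<Gamma> (Dl # s) =
    loop_class True V E \<Gamma> (Dl # reversing_word) \<otimes>\<^bsub>Aut_R V E \<Gamma>\<^esub>
    loop_class True V E \<Gamma> (rev reversing_word @ s)"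
proof -
  interpret loop_group V E True \<Gamma>
    by unfold_locales (fact \<Gamma>_subset)
  define u where "u = rev reversing_word @ s"
  have "walk V \<Gamma> u = Some \<Gamma>"
    using walk_rev[OF reversing_word(2)] assms unfolding u_def by (simp add: walk_append)
  then have loops: "Dl # reversing_word \<in> Loops" "u \<in> Loops" "Dl # s \<in> Loops"
    using reversing_word(2) assms unfolding loops_def allowed_def by simp_all
  have "word_eq True V E (converse \<Gamma>) (reversing_word @ u) s"
    using word_eq_cancel[OF reversing_word(2)] assms unfolding u_def by (simp add: allowed_def)
  then have "word_eq True V E \<Gamma> (Dl # reversing_word @ u) (Dl # s)"
    using word_eq_prefix[of V \<Gamma> "[Dl]" "converse \<Gamma>" True] by (simp add: allowed_def)
  then have "cls (Dl # s) = cls (Dl # reversing_word @ u)"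
    using loop_class_eq_iff append_in_loops[OF loops(1,2)] loops(3) word_eq_sym by simp
  then show ?thesis
    using loop_class_mult[OF loops(1,2)] unfolding u_def by simp
qed

lemma Aut_R_generated_by_reversal_and_coxeter:
  "carrier (Aut_R V E \<Gamma>) \<subseteq> generate (Aut_R V E \<Gamma>)
     {loop_class True V E \<Gamma> (Dl # reversing_word), loop_class True V E \<Gamma> coxeter_word}"
    (is "_ \<subseteq> generate _ ?S")
proof
  interpret loop_group V E True \<Gamma>
    by unfold_locales (fact \<Gamma>_subset)
  interpret Aut: group Aut
    by (fact group_Aut)
  have sigma_in_gen: "cls s \<in> generate Aut ?S" if "walk V \<Gamma> s = Some \<Gamma>" "Dl \<notin> set s" for s
    using sigma_loop_in_generate[OF that] Aut.mono_generate[of "{cls coxeter_word}" ?S] by blast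
  fix y assume "y \<in> carrier Aut"
  then obtain w where w: "w \<in> Loops" "y = cls w"
    unfolding carrier_Aut by blast
  then obtain s where s: "Dl \<notin> set s" "word_eq True V E \<Gamma> w s \<or> word_eq True V E \<Gamma> w (Dl # s)"
    using word_eq_Dl_normal_form[OF \<Gamma>_subset] unfolding loops_def by fastforce
  then consider "word_eq True V E \<Gamma> w s" | "word_eq True V E \<Gamma> w (Dl # s)"
    by blast
  then show "y \<in> generate Aut ?S"
  proof cases
    case 1
    then have "s \<in> Loops" "y = cls s"
      using word_eq_loops[OF \<Gamma>_subset 1] w loop_class_eq_iff by auto
    then show ?thesis
      using sigma_in_gen s(1) unfolding loops_def by blast
  next
    case 2
    then have "Dl # s \<in> Loops" "y = cls (Dl # s)"
      using word_eq_loops[OF \<Gamma>_subset 2] w loop_class_eq_iff by auto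
    then have s_walk: "walk V (converse \<Gamma>) s = Some \<Gamma>"
      unfolding loops_def by simp
    then have "walk V \<Gamma> (rev reversing_word @ s) = Some \<Gamma>"
      using walk_rev[OF reversing_word(2)] by (simp add: walk_append)
    moreover have "Dl \<notin> set (rev reversing_word @ s)"
      using s(1) sink_adapted_Dl_free[OF reversing_word(1)] by simp
    moreover have "cls (Dl # reversing_word) \<in> generate Aut ?S"
      by (simp add: generate.incl)
    ultimately show ?thesis
      using Dl_loop_class_decompose[OF s_walk] sigma_in_gen \<open>y = cls (Dl # s)\<close> generate.eng
      by metis
  qed
qed

theorem Aut_R_generated_by_two_involutions:
  "group (Aut_R V E \<Gamma>) \<and>
    (\<exists>a b. is_involution (Aut_R V E \<Gamma>) a \<and> is_involution (Aut_R V E \<Gamma>) b \<and>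
      subgroup_generated (Aut_R V E \<Gamma>) {a, b} = Aut_R V E \<Gamma>)"
proof -
  interpret loop_group V E True \<Gamma>
    by unfold_locales (fact \<Gamma>_subset)
  interpret Aut: group Aut
    by (fact group_Aut)
  let ?p = reversing_word and ?c = coxeter_word
  define a where "a = cls (Dl # ?p)"
  define b where "b = cls (Dl # ?p @ ?c)"
  have pc: "sink_adapted V (converse \<Gamma>) (?p @ ?c)" "walk V (converse \<Gamma>) (?p @ ?c) = Some \<Gamma>"
    using reversing_word coxeter_word by (auto simp: sink_adapted_append walk_append)
  have involutions: "is_involution Aut a" "is_involution Aut b"
    unfolding a_def b_def using Dl_reversing_involution reversing_word pc by blast+
  then have ab: "{a, b} \<subseteq> carrier Aut"
    unfolding is_involution_def by blast
  have loops: "Dl # ?p \<in> Loops" "?c \<in> Loops"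
    using reversing_word(2) coxeter_word(2) unfolding loops_def allowed_def by simp_all
  have "a \<otimes>\<^bsub>Aut\<^esub> cls ?c = b"
    unfolding a_def b_def using loop_class_mult[OF loops] by simp
  then have "cls ?c = inv\<^bsub>Aut\<^esub> a \<otimes>\<^bsub>Aut\<^esub> b"
    using Aut.inv_solve_left[of "cls ?c" a b] ab loop_class_in_carrier[OF loops(2)] by simp
  then have "{a, cls ?c} \<subseteq> generate Aut {a, b}"
    by (simp add: generate.eng generate.incl generate.inv)
  then have "generate Aut {a, cls ?c} \<subseteq> generate Aut {a, b}"
    using Aut.generate_subgroup_incl Aut.generate_is_subgroup[OF ab] by blast
  then have "carrier Aut \<subseteq> generate Aut {a, b}"
    using Aut_R_generated_by_reversal_and_coxeter unfolding a_def by blast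
  then have "subgroup_generated Aut {a, b} = Aut"
    using Aut.subgroup_generated_eq_self[OF ab] by blast
  then show ?thesis
    using group_Aut involutions by blast
qed

end

theorem mainTheorem14:
  fixes V :: "'v set" and E :: "('v \<times> 'v) set" and \<Gamma> :: "('v \<times> 'v) set"
  assumes "is_finite_tree V E"
    and "\<Gamma> \<in> Quiv V E"
  shows "(group (Aut_R0 V E \<Gamma>) \<and> cyclic_group (Aut_R0 V E \<Gamma>)) \<and>
         (group (Aut_R V E \<Gamma>) \<and>
         (\<exists>a b. is_involution (Aut_R V E \<Gamma>) a \<and> is_involution (Aut_R V E \<Gamma>) b \<and>
                subgroup_generated (Aut_R V E \<Gamma>) {a, b} = Aut_R V E \<Gamma>))"
proof -
  interpret oriented_tree V E \<Gamma>
    by unfold_locales (fact assms)+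
  show ?thesis
    using cyclic_group_Aut_R0 Aut_R_generated_by_two_involutions by blast
qed

end
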